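(* Let $m\ge0$, $p,q\ge0$ with $p+q\le m$, and $r=m-(p+q)$. Then there is a bijection $$B_m\backslash\mathrm{Her}^{(p,q;r)}_m(\mathbb C)\simeq\coprod_{J\in\binom{[m]}{p+q}}B_{p+q}\backslash\mathrm{GL}_{p+q}(\mathbb C)/\mathrm U(p,q),$$ where the right-hand side is a disjoint union of $\binom{m}{p+q}$ copies of the same set.
   Context: $B_k$ is the group of invertible upper triangular complex $k\times k$ matrices. $\mathrm{Her}^{(p,q;r)}_m(\mathbb C)$ is the set of $m\times m$ Hermitian matrices with $p$ positive eigenvalues, $q$ negative eigenvalues and eigenvalue $0$ of multiplicity $r$; $B_m$ acts on it by $b\cdot z=bzb^*$. $\mathrm U(p,q)=\{g\in\mathrm{GL}_{p+q}(\mathbb C):g^*\mathrm{diag}(\mathbf 1_p,-\mathbf 1_q)g=\mathrm{diag}(\mathbf 1_p,-\mathbf 1_q)\}$; $B_{p+q}$ acts on $\mathrm{GL}_{p+q}(\mathbb C)$ on the left and $\mathrm U(p,q)$ on the right. $\binom{[m]}{k}$ is the set of $k$-element subsets of $\{1,\dots,m\}$. *)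

theory Defs
  imports "Jordan_Normal_Form.Schur_Decomposition" "Jordan_Normal_Form.Char_Poly"
begin

definition Borel :: "nat \<Rightarrow> complex mat set" where
  "Borel k = {b \<in> carrier_mat k k. upper_triangular b \<and> invertible_mat b}"

definition GLc :: "nat \<Rightarrow> complex mat set" where
  "GLc k = {g \<in> carrier_mat k k. invertible_mat g}"

definition eig_mult :: "complex mat \<Rightarrow> complex \<Rightarrow> nat" where
  "eig_mult A x = order x (char_poly A)"

definition num_pos_eig :: "complex mat \<Rightarrow> nat" where
  "num_pos_eig A = (\<Sum>x \<in> {x. x \<in> \<real> \<and> Re x > 0 \<and> eigenvalue A x}. eig_mult A x)"

definition num_neg_eig :: "complex mat \<Rightarrow> nat" where
  "num_neg_eig A = (\<Sum>x \<in> {x. x \<in> \<real> \<and> Re x < 0 \<and> eigenvalue A x}. eig_mult A x)"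

definition Her :: "nat \<Rightarrow> nat \<Rightarrow> nat \<Rightarrow> nat \<Rightarrow> complex mat set" where
  "Her m p q r = {z \<in> carrier_mat m m. mat_adjoint z = z \<and>
      num_pos_eig z = p \<and> num_neg_eig z = q \<and> eig_mult z 0 = r}"

definition Ipq :: "nat \<Rightarrow> nat \<Rightarrow> complex mat" where
  "Ipq p q = mat (p + q) (p + q) (\<lambda>(i, j). if i = j then (if i < p then 1 else -1) else 0)"

definition Upq :: "nat \<Rightarrow> nat \<Rightarrow> complex mat set" where
  "Upq p q = {g \<in> carrier_mat (p + q) (p + q). mat_adjoint g * Ipq p q * g = Ipq p q}"

definition her_orbit_rel :: "nat \<Rightarrow> nat \<Rightarrow> nat \<Rightarrow> nat \<Rightarrow> complex mat rel" where
  "her_orbit_rel m p q r = {(z, w). z \<in> Her m p q r \<and> w \<in> Her m p q r \<and>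
      (\<exists>b \<in> Borel m. w = b * z * mat_adjoint b)}"

definition dcoset_rel :: "nat \<Rightarrow> nat \<Rightarrow> complex mat rel" where
  "dcoset_rel p q = {(g, h). g \<in> GLc (p + q) \<and> h \<in> GLc (p + q) \<and>
      (\<exists>b \<in> Borel (p + q). \<exists>u \<in> Upq p q. h = b * g * u)}"

end

theory Submission
  imports Defs "Jordan_Normal_Form.Spectral_Radius"
begin

text \<open>By the spectral theorem, a Hermitian \<open>z\<close> of signature \<open>(p, q; r)\<close> is a congruence
  \<open>A * Ipq p q * A\<^sup>*\<close> by an \<open>m \<times> (p + q)\<close> matrix \<open>A\<close> with a left inverse, and by Sylvester's law
  of inertia every such congruence has signature \<open>(p, q; r)\<close>. Row reduction by upper triangular
  matrices brings \<open>A\<close> to the shape \<open>E\<^sub>J * g\<close>, where \<open>g \<in> GLc (p + q)\<close> and \<open>E\<^sub>J\<close> places the rows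
  of \<open>g\<close> at the positions \<open>J\<close>; so every orbit contains a form \<open>(E\<^sub>J * g) * Ipq p q * (E\<^sub>J * g)\<^sup>*\<close>.
  Two such forms lie in one orbit exactly when the subsets agree and \<open>g, h\<close> lie in one double
  coset: the congruence determines \<open>E\<^sub>J * g\<close> up to a right factor in \<open>Upq p q\<close>, a triangular matrix
  can carry the columns of \<open>E\<^sub>J\<close> into those of \<open>E\<^sub>K\<close> only if \<open>J = K\<close>, and it then acts on \<open>g\<close>
  through its compression \<open>E\<^sub>J\<^sup>* * b * E\<^sub>J \<in> Borel (p + q)\<close>.\<close>

lemma index_mult_mat_sum:
  assumes "A \<in> carrier_mat m k" "B \<in> carrier_mat k n" "i < m" "j < n"
  shows "(A * B) $$ (i, j) = (\<Sum>l<k. A $$ (i, l) * B $$ (l, j))"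
  using assms by (auto simp: scalar_prod_def lessThan_atLeast0 intro!: sum.cong)

lemma sum_eq_single:
  assumes "finite A" "a \<in> A" "\<And>x. x \<in> A \<Longrightarrow> x \<noteq> a \<Longrightarrow> f x = 0"
  shows "sum f A = f a"
proof -
  have "sum f A = sum f {a}" using assms by (intro sum.mono_neutral_right) auto
  then show ?thesis by simp
qed

lemma assoc_mult_mat_dims:
  "dim_col A = dim_row B \<Longrightarrow> dim_col B = dim_row C \<Longrightarrow> A * B * C = A * (B * (C :: 'a :: semiring_0 mat))"
  by (rule assoc_mult_mat[of A "dim_row A" "dim_col A" B "dim_col B" C "dim_col C"]) auto

lemma left_mult_one_mat_dims: "dim_row A = n \<Longrightarrow> 1\<^sub>m n * A = (A :: 'a :: semiring_1 mat)"
  by (rule left_mult_one_mat[of A n "dim_col A"]) auto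

lemma right_mult_one_mat_dims: "dim_col A = n \<Longrightarrow> A * 1\<^sub>m n = (A :: 'a :: semiring_1 mat)"
  by (rule right_mult_one_mat[of A "dim_row A" n]) auto

lemma mat_adjoint_eq_mat:
  "mat_adjoint A = mat (dim_col A) (dim_row A) (\<lambda>(i, j). conjugate (A $$ (j, i)))"
  unfolding mat_adjoint_def mat_of_rows_def by (intro eq_matI) (auto simp: cols_def)

lemma dim_mat_adjoint [simp]:
  "dim_row (mat_adjoint A) = dim_col A" "dim_col (mat_adjoint A) = dim_row A"
  by (auto simp: mat_adjoint_eq_mat)

lemma carrier_mat_adjoint [simp]: "A \<in> carrier_mat m n \<Longrightarrow> mat_adjoint A \<in> carrier_mat n m"
  by auto

lemma index_mat_adjoint [simp]:
  "i < dim_col A \<Longrightarrow> j < dim_row A \<Longrightarrow> mat_adjoint A $$ (i, j) = conjugate (A $$ (j, i))"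
  by (auto simp: mat_adjoint_eq_mat)

lemma mat_adjoint_adjoint [simp]: "mat_adjoint (mat_adjoint A) = A"
  by (intro eq_matI) auto

lemma conjugate_one [simp]: "conjugate (1 :: 'a :: conjugatable_field) = 1"
proof -
  have "conjugate 1 * conjugate 1 = (conjugate 1 :: 'a)"
    by (metis conjugate_dist_mul mult_1)
  then show ?thesis by (metis conjugate_id conjugate_zero mult_cancel_right2 zero_neq_one)
qed

lemma mat_adjoint_one [simp]: "mat_adjoint (1\<^sub>m n :: 'a :: conjugatable_field mat) = 1\<^sub>m n"
  by (intro eq_matI) auto

lemma mat_adjoint_mult:
  fixes A :: "'a :: conjugatable_field mat"
  assumes "A \<in> carrier_mat m k" "B \<in> carrier_mat k n"
  shows "mat_adjoint (A * B) = mat_adjoint B * mat_adjoint A"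
proof (rule eq_matI)
  fix i j assume "i < dim_row (mat_adjoint B * mat_adjoint A)" "j < dim_col (mat_adjoint B * mat_adjoint A)"
  then have ij: "i < n" "j < m" using assms by auto
  have "mat_adjoint (A * B) $$ (i, j) = conjugate ((A * B) $$ (j, i))"
    using assms ij by simp
  also have "\<dots> = conjugate (\<Sum>l<k. A $$ (j, l) * B $$ (l, i))"
    using ij by (simp only: index_mult_mat_sum[OF assms])
  also have "\<dots> = (\<Sum>l<k. conjugate (B $$ (l, i)) * conjugate (A $$ (j, l)))"
    by (simp add: sum_conjugate conjugate_dist_mul mult.commute)
  also have "\<dots> = (mat_adjoint B * mat_adjoint A) $$ (i, j)"
    by (subst index_mult_mat_sum[of _ n k _ m]) (use assms ij in auto)
  finally show "mat_adjoint (A * B) $$ (i, j) = (mat_adjoint B * mat_adjoint A) $$ (i, j)" .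
qed (use assms in auto)

lemma congruence_mult:
  fixes X :: "'a :: conjugatable_field mat"
  assumes "X \<in> carrier_mat m k" "Y \<in> carrier_mat k n" "I \<in> carrier_mat n n"
  shows "(X * Y) * I * mat_adjoint (X * Y) = X * (Y * I * mat_adjoint Y) * mat_adjoint X"
  using assms by (simp add: mat_adjoint_mult[OF assms(1,2)] assoc_mult_mat_dims)

lemma hermitian_congruence:
  fixes A :: "'a :: conjugatable_field mat"
  assumes "A \<in> carrier_mat m n" "I \<in> carrier_mat n n" "mat_adjoint I = I"
  shows "mat_adjoint (A * I * mat_adjoint A) = A * I * mat_adjoint A"
proof -
  have "mat_adjoint (A * I * mat_adjoint A) = A * mat_adjoint (A * I)"
    using assms by (simp add: mat_adjoint_mult[of _ m n _ m])
  also have "\<dots> = A * I * mat_adjoint A"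
    using assms by (simp add: mat_adjoint_mult[of _ m n _ n] assoc_mult_mat_dims)
  finally show ?thesis .
qed

lemma Ipq_carrier [simp]: "Ipq p q \<in> carrier_mat (p + q) (p + q)"
  by (simp add: Ipq_def)

lemma dim_Ipq [simp]: "dim_row (Ipq p q) = p + q" "dim_col (Ipq p q) = p + q"
  by (simp_all add: Ipq_def)

lemma index_Ipq:
  "i < p + q \<Longrightarrow> j < p + q \<Longrightarrow> Ipq p q $$ (i, j) = (if i = j then (if i < p then 1 else -1) else 0)"
  by (simp add: Ipq_def)

lemma mat_adjoint_Ipq [simp]: "mat_adjoint (Ipq p q) = Ipq p q"
  by (intro eq_matI) (auto simp: Ipq_def)

lemma Ipq_mult_Ipq [simp]: "Ipq p q * Ipq p q = 1\<^sub>m (p + q)"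
proof (intro eq_matI)
  fix i j assume ij: "i < dim_row (1\<^sub>m (p + q))" "j < dim_col (1\<^sub>m (p + q) :: complex mat)"
  have "(Ipq p q * Ipq p q) $$ (i, j) = (\<Sum>l<p + q. Ipq p q $$ (i, l) * Ipq p q $$ (l, j))"
    using ij by (intro index_mult_mat_sum) auto
  also have "\<dots> = Ipq p q $$ (i, i) * Ipq p q $$ (i, j)"
    using ij by (intro sum_eq_single) (auto simp: index_Ipq)
  finally show "(Ipq p q * Ipq p q) $$ (i, j) = 1\<^sub>m (p + q) $$ (i, j)"
    using ij by (auto simp: index_Ipq)
qed auto

lemma Ipq_mult_Ipq_left: "dim_row X = p + q \<Longrightarrow> Ipq p q * (Ipq p q * X) = X"
  by (simp add: assoc_mult_mat_dims[symmetric] left_mult_one_mat_dims del: Ipq_mult_Ipq)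
    (simp add: left_mult_one_mat_dims)

lemma invertible_mat_iff_left_inverse:
  fixes A :: "'a :: field mat"
  assumes A: "A \<in> carrier_mat n n"
  shows "invertible_mat A \<longleftrightarrow> (\<exists>B\<in>carrier_mat n n. B * A = 1\<^sub>m n)"
proof
  assume "invertible_mat A"
  then obtain B where AB: "A * B = 1\<^sub>m n" and BA: "B * A = 1\<^sub>m (dim_row B)"
    using A unfolding invertible_mat_def inverts_mat_def by auto
  have "B \<in> carrier_mat n n"
    using AB BA A by (metis carrier_matD carrier_matI index_mult_mat(2,3) index_one_mat(2,3))
  then show "\<exists>B\<in>carrier_mat n n. B * A = 1\<^sub>m n" using BA by auto
next
  assume "\<exists>B\<in>carrier_mat n n. B * A = 1\<^sub>m n"
  then obtain B where B: "B \<in> carrier_mat n n" "B * A = 1\<^sub>m n" by auto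
  then have "A * B = 1\<^sub>m n" using mat_mult_left_right_inverse[OF B(1) A] by auto
  then show "invertible_mat A"
    using A B unfolding invertible_mat_def inverts_mat_def square_mat.simps by auto
qed

lemma invertible_mat_iff_det:
  fixes A :: "'a :: field mat"
  assumes A: "A \<in> carrier_mat n n"
  shows "invertible_mat A \<longleftrightarrow> det A \<noteq> 0"
proof
  assume "invertible_mat A"
  then obtain B where B: "B \<in> carrier_mat n n" "B * A = 1\<^sub>m n"
    using invertible_mat_iff_left_inverse[OF A] by auto
  from arg_cong[OF B(2), of det] det_mult[OF B(1) A] show "det A \<noteq> 0" by auto
next
  assume "det A \<noteq> 0"
  from det_non_zero_imp_unit[OF A this, of undefined]
  obtain B where "B \<in> carrier_mat n n" "B * A = 1\<^sub>m n"
    unfolding Units_def ring_mat_def by auto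
  then show "invertible_mat A" using invertible_mat_iff_left_inverse[OF A] by auto
qed

lemma carrier_dims_eq_if_inverse:
  fixes X :: "'a :: field_char_0 mat"
  assumes X: "X \<in> carrier_mat a b" and Y: "Y \<in> carrier_mat b a"
    and XY: "X * Y = 1\<^sub>m a" and YX: "Y * X = 1\<^sub>m b"
  shows "a = b"
proof -
  have "(of_nat a :: 'a) = (\<Sum>i<a. (X * Y) $$ (i, i))" unfolding XY by simp
  also have "\<dots> = (\<Sum>i<a. \<Sum>j<b. X $$ (i, j) * Y $$ (j, i))"
    by (intro sum.cong refl index_mult_mat_sum[OF X Y]) auto
  also have "\<dots> = (\<Sum>j<b. \<Sum>i<a. Y $$ (j, i) * X $$ (i, j))"
    by (subst sum.swap) (simp add: mult.commute)
  also have "\<dots> = (\<Sum>j<b. (Y * X) $$ (j, j))"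
    by (intro sum.cong refl index_mult_mat_sum[OF Y X, symmetric]) auto
  also have "\<dots> = of_nat b" unfolding YX by simp
  finally show ?thesis by simp
qed

lemma Borel_iff:
  "b \<in> Borel k \<longleftrightarrow> b \<in> carrier_mat k k \<and> (\<forall>i<k. \<forall>j<i. b $$ (i, j) = 0) \<and> (\<forall>i<k. b $$ (i, i) \<noteq> 0)"
proof -
  have "det b = (\<Prod>i = 0..<k. b $$ (i, i))" if "b \<in> carrier_mat k k" "upper_triangular b"
    using that by (simp add: det_upper_triangular prod_list_diag_prod)
  then show ?thesis
    unfolding Borel_def upper_triangular_def using invertible_mat_iff_det[of b k] by auto
qed

lemma Borel_carrier: "b \<in> Borel k \<Longrightarrow> b \<in> carrier_mat k k"
  unfolding Borel_def by auto

lemma Borel_lower_zero: "b \<in> Borel k \<Longrightarrow> j < i \<Longrightarrow> i < k \<Longrightarrow> b $$ (i, j) = 0"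
  unfolding Borel_iff by auto

lemma Borel_diag_nonzero: "b \<in> Borel k \<Longrightarrow> i < k \<Longrightarrow> b $$ (i, i) \<noteq> 0"
  unfolding Borel_iff by auto

lemma BorelI:
  "b \<in> carrier_mat k k \<Longrightarrow> (\<And>i j. j < i \<Longrightarrow> i < k \<Longrightarrow> b $$ (i, j) = 0) \<Longrightarrow>
    (\<And>i. i < k \<Longrightarrow> b $$ (i, i) \<noteq> 0) \<Longrightarrow> b \<in> Borel k"
  unfolding Borel_iff by auto

lemma Borel_one: "1\<^sub>m k \<in> Borel k"
  by (rule BorelI) auto

lemma Borel_mult:
  assumes b: "b \<in> Borel k" and c: "c \<in> Borel k"
  shows "b * c \<in> Borel k"
proof -
  have bc: "b \<in> carrier_mat k k" "c \<in> carrier_mat k k" using b c Borel_carrier by auto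
  have "det (b * c) \<noteq> 0" using det_mult[OF bc] b c invertible_mat_iff_det unfolding Borel_def by auto
  moreover have "upper_triangular (b * c)"
    unfolding upper_triangular_def
  proof (intro allI impI)
    fix i j assume ij: "i < dim_row (b * c)" "j < i"
    have "(b * c) $$ (i, j) = (\<Sum>l<k. b $$ (i, l) * c $$ (l, j))"
      using ij bc by (intro index_mult_mat_sum[of _ k k _ k]) auto
    also have "\<dots> = 0"
    proof (intro sum.neutral ballI)
      fix l assume "l \<in> {..<k}"
      then show "b $$ (i, l) * c $$ (l, j) = 0"
        using ij bc Borel_lower_zero[OF b, of l i] Borel_lower_zero[OF c, of j l] by (cases "l < i") auto
    qed
    finally show "(b * c) $$ (i, j) = 0" .
  qed
  ultimately show ?thesis unfolding Borel_def using bc invertible_mat_iff_det[of "b * c" k] by auto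
qed

lemma Borel_inverse:
  assumes b: "b \<in> Borel k"
  obtains c where "c \<in> Borel k" "c * b = 1\<^sub>m k" "b * c = 1\<^sub>m k"
proof -
  have bc: "b \<in> carrier_mat k k" using b Borel_carrier by auto
  obtain c where c: "c \<in> carrier_mat k k" "c * b = 1\<^sub>m k"
    using b invertible_mat_iff_left_inverse[OF bc] unfolding Borel_def by auto
  have cb: "b * c = 1\<^sub>m k" using mat_mult_left_right_inverse[OF c(1) bc c(2)] .
  \<comment> \<open>Column \<open>j\<close> of \<open>c * b = 1\<close>, read below the diagonal, forces the entries of \<open>c\<close> below
     the diagonal to vanish, column by column from the left.\<close>
  have "\<forall>i. j < i \<longrightarrow> i < k \<longrightarrow> c $$ (i, j) = 0" for j
  proof (induction j rule: less_induct)
    case (less j)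
    show ?case
    proof (intro allI impI)
      fix i assume ij: "j < i" "i < k"
      have "0 = (c * b) $$ (i, j)" using c ij by auto
      also have "\<dots> = (\<Sum>l<k. c $$ (i, l) * b $$ (l, j))"
        using ij bc c by (intro index_mult_mat_sum[of _ k k _ k]) auto
      also have "\<dots> = c $$ (i, j) * b $$ (j, j)"
      proof (rule sum_eq_single)
        fix l assume "l \<in> {..<k}" "l \<noteq> j"
        then show "c $$ (i, l) * b $$ (l, j) = 0"
          using ij less.IH Borel_lower_zero[OF b, of j l] by (cases "l < j") auto
      qed (use ij in auto)
      finally show "c $$ (i, j) = 0" using Borel_diag_nonzero[OF b, of j] ij by auto
    qed
  qed
  then have "upper_triangular c" unfolding upper_triangular_def using c(1) by auto
  moreover have "det c \<noteq> 0" using arg_cong[OF c(2), of det] det_mult[OF c(1) bc] by auto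
  ultimately have "c \<in> Borel k" unfolding Borel_def using c(1) invertible_mat_iff_det by auto
  then show ?thesis using that c(2) cb by auto
qed

lemma GLc_iff: "g \<in> GLc n \<longleftrightarrow> g \<in> carrier_mat n n \<and> (\<exists>h\<in>carrier_mat n n. h * g = 1\<^sub>m n)"
  unfolding GLc_def using invertible_mat_iff_left_inverse by auto

lemma GLc_carrier: "g \<in> GLc n \<Longrightarrow> g \<in> carrier_mat n n"
  unfolding GLc_def by auto

lemma GLc_mult:
  assumes "g \<in> GLc n" "h \<in> GLc n"
  shows "g * h \<in> GLc n"
proof -
  obtain g' h' where g: "g \<in> carrier_mat n n" "g' \<in> carrier_mat n n" "g' * g = 1\<^sub>m n"
    and h: "h \<in> carrier_mat n n" "h' \<in> carrier_mat n n" "h' * h = 1\<^sub>m n"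
    using assms GLc_iff by auto
  have "(h' * g') * (g * h) = h' * ((g' * g) * h)"
    using g(1,2) h(1,2) by (simp add: assoc_mult_mat_dims)
  also have "\<dots> = 1\<^sub>m n" unfolding g(3) using h by simp
  finally show ?thesis unfolding GLc_iff using g h by (intro conjI bexI[of _ "h' * g'"]) auto
qed

lemma Upq_carrier: "u \<in> Upq p q \<Longrightarrow> u \<in> carrier_mat (p + q) (p + q)"
  unfolding Upq_def by auto

lemma Ipq_congruence_flip:
  assumes u: "u \<in> carrier_mat (p + q) (p + q)" and eq: "mat_adjoint u * Ipq p q * u = Ipq p q"
  shows "u * Ipq p q * mat_adjoint u = Ipq p q"
proof -
  define v where "v = Ipq p q * mat_adjoint u * Ipq p q"
  have v: "v \<in> carrier_mat (p + q) (p + q)" using u unfolding v_def by auto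
  have "v * u = Ipq p q * (mat_adjoint u * Ipq p q * u)"
    using u unfolding v_def by (simp add: assoc_mult_mat_dims)
  then have "v * u = 1\<^sub>m (p + q)" unfolding eq by simp
  then have uv: "u * v = 1\<^sub>m (p + q)" using mat_mult_left_right_inverse[OF v u] by simp
  have "u * Ipq p q * mat_adjoint u = u * v * Ipq p q"
    using u unfolding v_def by (simp add: assoc_mult_mat_dims Ipq_mult_Ipq_left)
  then show ?thesis unfolding uv by simp
qed

lemma Upq_iff:
  "u \<in> Upq p q \<longleftrightarrow> u \<in> carrier_mat (p + q) (p + q) \<and> u * Ipq p q * mat_adjoint u = Ipq p q"
  unfolding Upq_def
  using Ipq_congruence_flip[of u p q] Ipq_congruence_flip[of "mat_adjoint u" p q] by auto

lemma Upq_one: "1\<^sub>m (p + q) \<in> Upq p q"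
  unfolding Upq_def by auto

lemma Upq_mult:
  assumes u: "u \<in> Upq p q" and v: "v \<in> Upq p q"
  shows "u * v \<in> Upq p q"
proof -
  have uc: "u \<in> carrier_mat (p + q) (p + q)" and vc: "v \<in> carrier_mat (p + q) (p + q)"
    using u v Upq_carrier by auto
  have "u * v * Ipq p q * mat_adjoint (u * v) = u * (v * Ipq p q * mat_adjoint v) * mat_adjoint u"
    by (rule congruence_mult[OF uc vc Ipq_carrier])
  then show ?thesis using u v uc vc unfolding Upq_iff by auto
qed

lemma Upq_inverse:
  assumes u: "u \<in> Upq p q"
  shows "Ipq p q * mat_adjoint u * Ipq p q \<in> Upq p q"
    and "u * (Ipq p q * mat_adjoint u * Ipq p q) = 1\<^sub>m (p + q)"
proof -
  define v where "v = Ipq p q * mat_adjoint u * Ipq p q"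
  have uc: "u \<in> carrier_mat (p + q) (p + q)" using u Upq_carrier by auto
  have eq: "u * Ipq p q * mat_adjoint u = Ipq p q" using u unfolding Upq_iff by auto
  have "mat_adjoint v = Ipq p q * mat_adjoint (Ipq p q * mat_adjoint u)"
    unfolding v_def
    by (simp only: mat_adjoint_mult[OF mult_carrier_mat[OF Ipq_carrier carrier_mat_adjoint[OF uc]] Ipq_carrier]
        mat_adjoint_Ipq)
  also have "\<dots> = Ipq p q * (u * Ipq p q)"
    by (simp only: mat_adjoint_mult[OF Ipq_carrier carrier_mat_adjoint[OF uc]] mat_adjoint_adjoint mat_adjoint_Ipq)
  finally have adj_v: "mat_adjoint v = Ipq p q * u * Ipq p q"
    using uc by (simp add: assoc_mult_mat_dims)
  have "mat_adjoint v * Ipq p q * v = Ipq p q * (u * Ipq p q * mat_adjoint u) * Ipq p q"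
    using uc by (subst adj_v) (simp add: v_def assoc_mult_mat_dims Ipq_mult_Ipq_left)
  then have "mat_adjoint v * Ipq p q * v = Ipq p q"
    unfolding eq by (simp add: assoc_mult_mat_dims Ipq_mult_Ipq_left right_mult_one_mat_dims)
  moreover have "v \<in> carrier_mat (p + q) (p + q)" using uc unfolding v_def by auto
  ultimately show "v \<in> Upq p q" unfolding Upq_def by auto
  have "u * v = (u * Ipq p q * mat_adjoint u) * Ipq p q"
    using uc unfolding v_def by (simp add: assoc_mult_mat_dims)
  then show "u * v = 1\<^sub>m (p + q)" unfolding eq by simp
qed

lemma Upq_subset_GLc: "Upq p q \<subseteq> GLc (p + q)"
proof
  fix u assume u: "u \<in> Upq p q"
  have "(Ipq p q * mat_adjoint u * Ipq p q) * u = 1\<^sub>m (p + q)"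
    using Upq_inverse(2)[OF u] Upq_carrier[OF u]
    by (intro mat_mult_left_right_inverse[of u "p + q"]) auto
  then show "u \<in> GLc (p + q)" unfolding GLc_iff using Upq_carrier[OF u]
    by (intro conjI bexI[of _ "Ipq p q * mat_adjoint u * Ipq p q"]) auto
qed

lemma Her_carrier: "z \<in> Her m p q r \<Longrightarrow> z \<in> carrier_mat m m"
  unfolding Her_def by auto

lemma equiv_her_orbit_rel: "equiv (Her m p q r) (her_orbit_rel m p q r)"
proof (rule equivI)
  show "refl_on (Her m p q r) (her_orbit_rel m p q r)"
  proof (rule refl_onI)
    fix z assume z: "z \<in> Her m p q r"
    then have "z = 1\<^sub>m m * z * mat_adjoint (1\<^sub>m m)" using Her_carrier[OF z] by simp
    then show "(z, z) \<in> her_orbit_rel m p q r" unfolding her_orbit_rel_def using z Borel_one by blast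
  qed
next
  show "sym (her_orbit_rel m p q r)"
  proof (rule symI)
    fix z w assume "(z, w) \<in> her_orbit_rel m p q r"
    then obtain b where zw: "z \<in> Her m p q r" "w \<in> Her m p q r" "b \<in> Borel m" "w = b * z * mat_adjoint b"
      unfolding her_orbit_rel_def by auto
    obtain c where c: "c \<in> Borel m" "c * b = 1\<^sub>m m" using Borel_inverse[OF zw(3)] by auto
    have "c * w * mat_adjoint c = (c * b) * z * mat_adjoint (c * b)"
      unfolding zw(4)
      by (rule congruence_mult[OF Borel_carrier[OF c(1)] Borel_carrier[OF zw(3)] Her_carrier[OF zw(1)], symmetric])
    then have "z = c * w * mat_adjoint c" unfolding c(2) using Her_carrier[OF zw(1)] by simp
    then show "(w, z) \<in> her_orbit_rel m p q r" unfolding her_orbit_rel_def using zw(1,2) c(1) by blast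
  qed
next
  show "trans (her_orbit_rel m p q r)"
  proof (rule transI)
    fix x y z assume "(x, y) \<in> her_orbit_rel m p q r" "(y, z) \<in> her_orbit_rel m p q r"
    then obtain b c where xy: "x \<in> Her m p q r" "z \<in> Her m p q r" "b \<in> Borel m" "c \<in> Borel m"
      "z = c * (b * x * mat_adjoint b) * mat_adjoint c"
      unfolding her_orbit_rel_def by auto
    then have "z = (c * b) * x * mat_adjoint (c * b)"
      using congruence_mult[OF Borel_carrier[OF xy(4)] Borel_carrier[OF xy(3)] Her_carrier[OF xy(1)]] by simp
    then show "(x, z) \<in> her_orbit_rel m p q r" unfolding her_orbit_rel_def using xy Borel_mult by auto
  qed
qed (auto simp: her_orbit_rel_def)

lemma equiv_dcoset_rel: "equiv (GLc (p + q)) (dcoset_rel p q)"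
proof (rule equivI)
  show "refl_on (GLc (p + q)) (dcoset_rel p q)"
  proof (rule refl_onI)
    fix g assume g: "g \<in> GLc (p + q)"
    then have "g = 1\<^sub>m (p + q) * g * 1\<^sub>m (p + q)" using GLc_carrier[OF g] by simp
    then show "(g, g) \<in> dcoset_rel p q" unfolding dcoset_rel_def using g Borel_one Upq_one by blast
  qed
next
  show "sym (dcoset_rel p q)"
  proof (rule symI)
    fix g h assume "(g, h) \<in> dcoset_rel p q"
    then obtain b u where gh: "g \<in> GLc (p + q)" "h \<in> GLc (p + q)" "b \<in> Borel (p + q)" "u \<in> Upq p q"
      "h = b * g * u"
      unfolding dcoset_rel_def by auto
    obtain c where c: "c \<in> Borel (p + q)" "c * b = 1\<^sub>m (p + q)" using Borel_inverse[OF gh(3)] by auto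
    define v where "v = Ipq p q * mat_adjoint u * Ipq p q"
    have v: "v \<in> Upq p q" "u * v = 1\<^sub>m (p + q)" unfolding v_def using Upq_inverse[OF gh(4)] by auto
    have "c * h * v = (c * b) * g * (u * v)"
      unfolding gh(5)
      by (simp add: assoc_mult_mat_dims carrier_matD[OF GLc_carrier[OF gh(1)]] carrier_matD[OF Borel_carrier[OF gh(3)]]
          carrier_matD[OF Borel_carrier[OF c(1)]] carrier_matD[OF Upq_carrier[OF gh(4)]] carrier_matD[OF Upq_carrier[OF v(1)]])
    then have "g = c * h * v" unfolding c(2) v(2) using GLc_carrier[OF gh(1)] by simp
    then show "(h, g) \<in> dcoset_rel p q" unfolding dcoset_rel_def using gh(1,2) c(1) v(1) by blast
  qed
next
  show "trans (dcoset_rel p q)"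
  proof (rule transI)
    fix x y z assume "(x, y) \<in> dcoset_rel p q" "(y, z) \<in> dcoset_rel p q"
    then obtain b c u v where xy: "x \<in> GLc (p + q)" "z \<in> GLc (p + q)" "b \<in> Borel (p + q)" "u \<in> Upq p q"
      "c \<in> Borel (p + q)" "v \<in> Upq p q" "z = c * (b * x * u) * v"
      unfolding dcoset_rel_def by auto
    then have "z = (c * b) * x * (u * v)"
      by (simp add: assoc_mult_mat_dims carrier_matD[OF GLc_carrier[OF xy(1)]] carrier_matD[OF Borel_carrier[OF xy(3)]]
          carrier_matD[OF Borel_carrier[OF xy(5)]] carrier_matD[OF Upq_carrier[OF xy(4)]] carrier_matD[OF Upq_carrier[OF xy(6)]])
    then show "(x, z) \<in> dcoset_rel p q" unfolding dcoset_rel_def using xy Borel_mult Upq_mult by blast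
  qed
qed (auto simp: dcoset_rel_def)

lemma ex_bij_betw_quotient_Sigma:
  assumes A: "equiv A R" and B: "equiv B S"
    and into: "\<And>i x. i \<in> I \<Longrightarrow> x \<in> B \<Longrightarrow> f i x \<in> A"
    and compat: "\<And>i x y. i \<in> I \<Longrightarrow> (x, y) \<in> S \<Longrightarrow> (f i x, f i y) \<in> R"
    and inj: "\<And>i j x y. i \<in> I \<Longrightarrow> j \<in> I \<Longrightarrow> x \<in> B \<Longrightarrow> y \<in> B \<Longrightarrow> (f i x, f j y) \<in> R \<Longrightarrow>
      i = j \<and> (x, y) \<in> S"
    and surj: "\<And>a. a \<in> A \<Longrightarrow> \<exists>i\<in>I. \<exists>x\<in>B. (a, f i x) \<in> R"
  shows "\<exists>g. bij_betw g (A // R) (SIGMA i:I. B // S)"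
proof -
  define F where "F = (\<lambda>(i, X). \<Union>x\<in>X. R `` {f i x})"
  have F: "F (i, S `` {x}) = R `` {f i x}" if "i \<in> I" "x \<in> B" for i x
  proof -
    have "(\<lambda>x. R `` {f i x}) respects S"
      by (intro congruentI) (simp add: equiv_class_eq[OF A] compat[OF that(1)])
    then show ?thesis unfolding F_def using UN_equiv_class[OF B _ that(2)] by simp
  qed
  have "inj_on F (SIGMA i:I. B // S)"
  proof (rule inj_onI, clarify)
    fix i X j Y assume i: "i \<in> I" "X \<in> B // S" and j: "j \<in> I" "Y \<in> B // S" and eq: "F (i, X) = F (j, Y)"
    obtain x y where x: "x \<in> B" "X = S `` {x}" and y: "y \<in> B" "Y = S `` {y}"
      using i(2) j(2) by (auto elim!: quotientE)
    have "(f i x, f j y) \<in> R"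
      using eq eq_equiv_class_iff[OF A into[OF i(1) x(1)] into[OF j(1) y(1)]]
      unfolding x(2) y(2) F[OF i(1) x(1)] F[OF j(1) y(1)] by simp
    then have "i = j" "(x, y) \<in> S" using inj i j x y by auto
    then show "i = j \<and> X = Y" unfolding x(2) y(2) using equiv_class_eq[OF B] by auto
  qed
  moreover have "F ` (SIGMA i:I. B // S) = A // R"
  proof (intro equalityI subsetI)
    fix Z assume "Z \<in> F ` (SIGMA i:I. B // S)"
    then obtain i x where "i \<in> I" "x \<in> B" "Z = F (i, S `` {x})" by (auto elim!: quotientE)
    then show "Z \<in> A // R" using F into by (auto intro: quotientI)
  next
    fix Z assume "Z \<in> A // R"
    then obtain a where a: "a \<in> A" "Z = R `` {a}" by (auto elim!: quotientE)
    then obtain i x where ix: "i \<in> I" "x \<in> B" "(a, f i x) \<in> R" using surj by blast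
    then have "Z = F (i, S `` {x})" unfolding a(2) F[OF ix(1,2)] using equiv_class_eq[OF A] by auto
    then show "Z \<in> F ` (SIGMA i:I. B // S)" using ix by (auto intro: quotientI)
  qed
  ultimately have "bij_betw F (SIGMA i:I. B // S) (A // R)" unfolding bij_betw_def by simp
  then show ?thesis using bij_betw_the_inv_into by blast
qed

subsection \<open>The spectral theorem for Hermitian matrices\<close>

lemma unitary_of_corthogonal:
  fixes ws :: "complex vec list"
  assumes ws: "set ws \<subseteq> carrier_vec n" "corthogonal ws" "length ws = n"
  obtains W where "W \<in> carrier_mat n n" "mat_adjoint W * W = 1\<^sub>m n"
    "\<And>j. j < n \<Longrightarrow> \<exists>c. c \<noteq> 0 \<and> col W j = c \<cdot>\<^sub>v ws ! j"
proof -
  have wsc: "ws ! j \<in> carrier_vec n" if "j < n" for j using ws that by auto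
  define s where "s j = complex_of_real (sqrt (\<Sum>i<n. (cmod (ws ! j $ i))\<^sup>2))" for j
  have ss: "s j * s j = ws ! j \<bullet>c ws ! j" if "j < n" for j
  proof -
    have "ws ! j \<bullet>c ws ! j = (\<Sum>i<n. complex_of_real ((cmod (ws ! j $ i))\<^sup>2))"
      using wsc[OF that] unfolding complex_norm_square
      by (auto simp: scalar_prod_def lessThan_atLeast0 intro!: sum.cong)
    then show ?thesis unfolding s_def by (simp flip: of_real_mult add: sum_nonneg)
  qed
  have s0: "s j \<noteq> 0" if "j < n" for j
    using ss[OF that] corthogonalD[OF ws(2), of j j] ws(3) that by auto
  define W where "W = mat n n (\<lambda>(i, j). ws ! j $ i / s j)"
  have W: "W \<in> carrier_mat n n" unfolding W_def by auto
  have "mat_adjoint W * W = 1\<^sub>m n"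
  proof (rule eq_matI)
    fix i j assume "i < dim_row (1\<^sub>m n :: complex mat)" "j < dim_col (1\<^sub>m n :: complex mat)"
    then have ij: "i < n" "j < n" by auto
    have "(mat_adjoint W * W) $$ (i, j) = (\<Sum>l<n. cnj (W $$ (l, i)) * W $$ (l, j))"
      using W ij by (subst index_mult_mat_sum[of _ n n _ n]) auto
    also have "\<dots> = (ws ! j \<bullet>c ws ! i) / (s i * s j)"
      using wsc[OF ij(1)] ij
      by (auto simp: W_def s_def scalar_prod_def lessThan_atLeast0 sum_divide_distrib intro!: sum.cong)
    also have "\<dots> = 1\<^sub>m n $$ (i, j)"
      using ss[OF ij(1)] s0[OF ij(1)] corthogonalD[OF ws(2), of j i] ws(3) ij by auto
    finally show "(mat_adjoint W * W) $$ (i, j) = 1\<^sub>m n $$ (i, j)" .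
  qed (use W in auto)
  moreover have "col W j = (1 / s j) \<cdot>\<^sub>v ws ! j" if "j < n" for j
    using wsc[OF that] that by (intro eq_vecI) (auto simp: W_def)
  ultimately show ?thesis using that W s0 by (metis divide_eq_0_iff zero_neq_one)
qed

lemma unitary_completion:
  fixes v :: "complex vec"
  assumes v: "v \<in> carrier_vec n" "v \<noteq> 0\<^sub>v n"
  obtains W c where "W \<in> carrier_mat n n" "mat_adjoint W * W = 1\<^sub>m n" "c \<noteq> 0" "col W 0 = c \<cdot>\<^sub>v v"
proof -
  interpret cof_vec_space n "TYPE(complex)" .
  define b where "b = basis_completion v"
  from basis_completion[OF v, folded b_def]
  have b: "distinct b" "\<not> lin_dep (set b)" "set b \<subseteq> carrier_vec n" "hd b = v" "length b = n" by auto
  have n: "0 < n" using v by (metis carrier_vecD eq_vecI index_zero_vec(2) less_nat_zero_code neq0_conv)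
  then obtain vs where bv: "b = v # vs" using b(4,5) by (cases b) auto
  define ws where "ws = gram_schmidt n b"
  have ws: "set ws \<subseteq> carrier_vec n" "corthogonal ws" "length ws = n"
    using gram_schmidt_result[OF b(3,1,2) refl, folded ws_def] b(5) by auto
  have "ws ! 0 = v"
    using gram_schmidt_hd[OF v(1), of vs, folded bv ws_def] ws(3) n by (cases ws) auto
  with unitary_of_corthogonal[OF ws] n that show ?thesis by metis
qed

definition scalar_block :: "complex \<Rightarrow> complex mat \<Rightarrow> nat \<Rightarrow> complex mat" where
  "scalar_block a M n = mat (Suc n) (Suc n)
     (\<lambda>(i, j). if i = 0 \<and> j = 0 then a else if i = 0 \<or> j = 0 then 0 else M $$ (i - 1, j - 1))"

lemma scalar_block_carrier [simp]: "scalar_block a M n \<in> carrier_mat (Suc n) (Suc n)"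
  by (simp add: scalar_block_def)

lemma dim_scalar_block [simp]:
  "dim_row (scalar_block a M n) = Suc n" "dim_col (scalar_block a M n) = Suc n"
  by (simp_all add: scalar_block_def)

lemma index_scalar_block:
  "i < Suc n \<Longrightarrow> j < Suc n \<Longrightarrow>
    scalar_block a M n $$ (i, j) = (if i = 0 \<and> j = 0 then a else if i = 0 \<or> j = 0 then 0 else M $$ (i - 1, j - 1))"
  by (simp add: scalar_block_def)

lemma scalar_block_mult:
  assumes M: "M \<in> carrier_mat n n" and N: "N \<in> carrier_mat n n"
  shows "scalar_block a M n * scalar_block b N n = scalar_block (a * b) (M * N) n"
proof (rule eq_matI)
  fix i j assume "i < dim_row (scalar_block (a * b) (M * N) n)" "j < dim_col (scalar_block (a * b) (M * N) n)"
  then have ij: "i < Suc n" "j < Suc n" by auto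
  have "(scalar_block a M n * scalar_block b N n) $$ (i, j) =
      scalar_block a M n $$ (i, 0) * scalar_block b N n $$ (0, j) +
      (\<Sum>l<n. scalar_block a M n $$ (i, Suc l) * scalar_block b N n $$ (Suc l, j))"
    using ij by (subst index_mult_mat_sum[of _ "Suc n" "Suc n" _ "Suc n"]) (auto simp only: sum.lessThan_Suc_shift,
        auto)
  also have "\<dots> = scalar_block (a * b) (M * N) n $$ (i, j)"
    using ij M N by (cases "i = 0 \<or> j = 0") (auto simp: index_scalar_block index_mult_mat_sum[OF M N] simp del: index_mult_mat(1))
  finally show "(scalar_block a M n * scalar_block b N n) $$ (i, j) = scalar_block (a * b) (M * N) n $$ (i, j)" .
qed auto

lemma mat_adjoint_scalar_block:
  "M \<in> carrier_mat n n \<Longrightarrow> mat_adjoint (scalar_block a M n) = scalar_block (cnj a) (mat_adjoint M) n"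
  by (rule eq_matI) (auto simp: index_scalar_block)

lemma scalar_block_one: "scalar_block 1 (1\<^sub>m n) n = 1\<^sub>m (Suc n)"
  by (rule eq_matI) (auto simp: index_scalar_block)

lemma hermitian_deflation:
  fixes z :: "complex mat"
  assumes z: "z \<in> carrier_mat (Suc n) (Suc n)" and herm: "mat_adjoint z = z"
  obtains W lam M where "W \<in> carrier_mat (Suc n) (Suc n)" "mat_adjoint W * W = 1\<^sub>m (Suc n)"
    "lam \<in> \<real>" "M \<in> carrier_mat n n" "mat_adjoint M = M" "z = W * scalar_block lam M n * mat_adjoint W"
proof -
  obtain lam where "eigenvalue z lam" using spectrum_non_empty[OF z] unfolding spectrum_def by auto
  then obtain v where v: "v \<in> carrier_vec (Suc n)" "v \<noteq> 0\<^sub>v (Suc n)" "z *\<^sub>v v = lam \<cdot>\<^sub>v v"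
    unfolding eigenvalue_def eigenvector_def using z by auto
  obtain W c where W: "W \<in> carrier_mat (Suc n) (Suc n)" "mat_adjoint W * W = 1\<^sub>m (Suc n)" "c \<noteq> 0"
    "col W 0 = c \<cdot>\<^sub>v v"
    using unitary_completion[OF v(1,2)] by auto
  have WW: "W * mat_adjoint W = 1\<^sub>m (Suc n)"
    using mat_mult_left_right_inverse[OF _ W(1) W(2)] W(1) by auto
  define A where "A = mat_adjoint W * z * W"
  have A: "A \<in> carrier_mat (Suc n) (Suc n)" unfolding A_def using W z by auto
  have A_herm: "mat_adjoint A = A"
    unfolding A_def using hermitian_congruence[OF carrier_mat_adjoint[OF W(1)] z herm] by simp
  have "col (z * W) 0 = z *\<^sub>v (c \<cdot>\<^sub>v v)"
    unfolding col_mult2[OF z W(1) zero_less_Suc] W(4) ..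
  also have "\<dots> = lam \<cdot>\<^sub>v col W 0"
    unfolding W(4) mult_mat_vec[OF z v(1)] v(3) by (simp add: smult_smult_assoc mult.commute)
  finally have "col (z * W) 0 = lam \<cdot>\<^sub>v col W 0" .
  \<comment> \<open>The first column of \<open>W\<close> is an eigenvector, so the first column of \<open>A\<close> is \<open>lam\<close> times a unit vector.\<close>
  then have A_col: "A $$ (i, 0) = (if i = 0 then lam else 0)" if i: "i < Suc n" for i
  proof -
    have "A $$ (i, 0) = row (mat_adjoint W) i \<bullet> col (z * W) 0"
      using i W z unfolding A_def by (simp add: assoc_mult_mat_dims)
    also have "\<dots> = lam * (mat_adjoint W * W) $$ (i, 0)"
      using \<open>col (z * W) 0 = lam \<cdot>\<^sub>v col W 0\<close> W(1) i
      by (simp add: scalar_prod_smult_distrib[of _ "Suc n"] carrier_vecI)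
    finally show ?thesis using W(2) i by auto
  qed
  have lam: "cnj lam = lam"
    using arg_cong[OF A_herm, of "\<lambda>B. B $$ (0, 0)"] A_col[of 0] A by auto
  define M where "M = mat n n (\<lambda>(i, j). A $$ (Suc i, Suc j))"
  have M: "M \<in> carrier_mat n n" by (simp add: M_def)
  have M_herm: "mat_adjoint M = M"
  proof (rule eq_matI)
    fix i j assume "i < dim_row M" "j < dim_col M"
    then have ij: "i < n" "j < n" using M by auto
    have "mat_adjoint M $$ (i, j) = mat_adjoint A $$ (Suc i, Suc j)"
      using ij A by (simp add: M_def)
    then show "mat_adjoint M $$ (i, j) = M $$ (i, j)" using ij by (simp add: A_herm M_def)
  qed (use M in auto)
  have "A = scalar_block lam M n"
  proof (rule eq_matI)
    fix i j assume ij: "i < dim_row (scalar_block lam M n)" "j < dim_col (scalar_block lam M n)"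
    have "A $$ (0, j) = cnj (A $$ (j, 0))"
      using A ij arg_cong[OF A_herm, of "\<lambda>B. B $$ (0, j)"] by auto
    then show "A $$ (i, j) = scalar_block lam M n $$ (i, j)"
      using A_col ij lam by (auto simp: index_scalar_block M_def)
  qed (use A in auto)
  moreover have "W * A * mat_adjoint W = (W * mat_adjoint W) * z * (W * mat_adjoint W)"
    using W z unfolding A_def by (simp add: assoc_mult_mat_dims)
  then have "z = W * A * mat_adjoint W" using WW z by simp
  ultimately show ?thesis using that W M M_herm lam Reals_cnj_iff by blast
qed

lemma hermitian_unitary_diagonalization:
  fixes z :: "complex mat"
  assumes "z \<in> carrier_mat n n" "mat_adjoint z = z"
  shows "\<exists>U D. U \<in> carrier_mat n n \<and> mat_adjoint U * U = 1\<^sub>m n \<and> D \<in> carrier_mat n n \<and>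
    diagonal_mat D \<and> (\<forall>i<n. D $$ (i, i) \<in> \<real>) \<and> z = U * D * mat_adjoint U"
  using assms
proof (induction n arbitrary: z)
  case 0
  then show ?case by (intro exI[of _ "1\<^sub>m 0"] exI[of _ z]) (auto simp: diagonal_mat_def)
next
  case (Suc n)
  obtain W lam M where W: "W \<in> carrier_mat (Suc n) (Suc n)" "mat_adjoint W * W = 1\<^sub>m (Suc n)"
    and lam: "lam \<in> \<real>" and M: "M \<in> carrier_mat n n" "mat_adjoint M = M"
    and z: "z = W * scalar_block lam M n * mat_adjoint W"
    using hermitian_deflation[OF Suc.prems] by blast
  obtain V D where V: "V \<in> carrier_mat n n" "mat_adjoint V * V = 1\<^sub>m n" and D: "D \<in> carrier_mat n n"
    "diagonal_mat D" "\<forall>i<n. D $$ (i, i) \<in> \<real>" and MV: "M = V * D * mat_adjoint V"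
    using Suc.IH[OF M] by blast
  define U where "U = W * scalar_block 1 V n"
  have U: "U \<in> carrier_mat (Suc n) (Suc n)" unfolding U_def using W by auto
  have U_adj: "mat_adjoint U = scalar_block 1 (mat_adjoint V) n * mat_adjoint W"
    unfolding U_def using W V by (simp add: mat_adjoint_mult[of _ "Suc n" "Suc n" _ "Suc n"] mat_adjoint_scalar_block)
  have "mat_adjoint U * U = scalar_block 1 (mat_adjoint V) n * (mat_adjoint W * W) * scalar_block 1 V n"
    unfolding U_adj unfolding U_def using W(1) V(1) by (simp add: assoc_mult_mat_dims)
  also have "\<dots> = 1\<^sub>m (Suc n)" using W(2) V by (simp add: scalar_block_mult scalar_block_one)
  finally have UU: "mat_adjoint U * U = 1\<^sub>m (Suc n)" .
  have "scalar_block lam M n = scalar_block 1 V n * scalar_block lam D n * scalar_block 1 (mat_adjoint V) n"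
    unfolding MV using V D by (simp add: scalar_block_mult)
  then have "z = U * scalar_block lam D n * mat_adjoint U"
    unfolding z U_adj unfolding U_def using W V by (simp add: assoc_mult_mat_dims)
  moreover have "diagonal_mat (scalar_block lam D n)" "\<forall>i<Suc n. scalar_block lam D n $$ (i, i) \<in> \<real>"
    using D lam by (auto simp: diagonal_mat_def index_scalar_block)
  ultimately show ?case using U UU by (intro exI[of _ U] exI[of _ "scalar_block lam D n"]) auto
qed

lemma order_prod_list_linear:
  fixes x :: "'a :: idom"
  shows "order x (\<Prod>a\<leftarrow>as. [:- a, 1:]) = length (filter ((=) x) as)"
proof (induction as)
  case (Cons a as)
  have "(\<Prod>a\<leftarrow>as. [:- a, 1:]) \<noteq> (0 :: 'a poly)" by (auto simp: prod_list_zero_iff)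
  then have "order x ([:- a, 1:] * (\<Prod>a\<leftarrow>as. [:- a, 1:])) = order x [:- a, 1:] + order x (\<Prod>a\<leftarrow>as. [:- a, 1:])"
    by (intro order_mult) (metis mult_eq_0_iff pCons_eq_0_iff one_neq_zero)
  then have "order x (\<Prod>a\<leftarrow>a # as. [:- a, 1:]) = order x [:- a, 1:] + order x (\<Prod>a\<leftarrow>as. [:- a, 1:])"
    by (simp only: list.map prod_list.Cons)
  moreover have "order x [:- a, 1:] = (if x = a then 1 else 0)"
    using order_power_n_n[of a 1] by (auto intro: order_0I)
  ultimately show ?case using Cons by auto
qed (simp add: order_0I)

lemma
  fixes z D :: "complex mat"
  assumes D: "D \<in> carrier_mat n n" "upper_triangular D" and z: "z \<in> carrier_mat n n"
    and sim: "similar_mat z D"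
  shows eig_mult_similar_upper_triangular: "eig_mult z x = card {i. i < n \<and> D $$ (i, i) = x}"
    and eigenvalue_similar_upper_triangular: "eigenvalue z x \<longleftrightarrow> (\<exists>i<n. D $$ (i, i) = x)"
proof -
  have cz: "char_poly z = (\<Prod>a\<leftarrow>diag_mat D. [:- a, 1:])"
    using char_poly_similar[OF sim] char_poly_upper_triangular[OF D] by simp
  have "length (filter ((=) x) (diag_mat D)) = card {i. i < n \<and> D $$ (i, i) = x}"
    unfolding length_filter_conv_card diag_mat_def using D by (intro arg_cong[where f = card]) auto
  then show em: "eig_mult z x = card {i. i < n \<and> D $$ (i, i) = x}"
    unfolding eig_mult_def cz order_prod_list_linear .
  have "char_poly z \<noteq> 0" unfolding cz by (auto simp: prod_list_zero_iff)
  then have "eigenvalue z x \<longleftrightarrow> eig_mult z x \<noteq> 0"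
    unfolding eig_mult_def using eigenvalue_root_char_poly[OF z] order_root by metis
  then show "eigenvalue z x \<longleftrightarrow> (\<exists>i<n. D $$ (i, i) = x)" unfolding em by auto
qed

lemma sum_eig_mult_similar_upper_triangular:
  fixes z D :: "complex mat"
  assumes D: "D \<in> carrier_mat n n" "upper_triangular D" and z: "z \<in> carrier_mat n n"
    and sim: "similar_mat z D"
  shows "(\<Sum>x \<in> {x. P x \<and> eigenvalue z x}. eig_mult z x) = card {i. i < n \<and> P (D $$ (i, i))}"
proof -
  let ?d = "\<lambda>i. D $$ (i, i)" and ?I = "{i. i < n \<and> P (D $$ (i, i))}"
  have "{x. P x \<and> eigenvalue z x} = ?d ` ?I"
    using eigenvalue_similar_upper_triangular[OF assms] by auto
  then have "(\<Sum>x \<in> {x. P x \<and> eigenvalue z x}. eig_mult z x) = (\<Sum>x \<in> ?d ` ?I. card {i \<in> ?I. ?d i = x})"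
    using eig_mult_similar_upper_triangular[OF assms] by (auto intro!: sum.cong arg_cong[where f = card])
  also have "\<dots> = card ?I" using sum.image_gen[of ?I "\<lambda>_. 1 :: nat" ?d, folded card_eq_sum] by simp
  finally show ?thesis .
qed

lemma similar_mat_unitary:
  fixes U :: "'a :: conjugatable_field mat"
  assumes "U \<in> carrier_mat n n" "mat_adjoint U * U = 1\<^sub>m n" "D \<in> carrier_mat n n" "z = U * D * mat_adjoint U"
  shows "similar_mat z D"
proof -
  have "U * mat_adjoint U = 1\<^sub>m n" using mat_mult_left_right_inverse[OF _ assms(1,2)] assms(1) by auto
  then have "similar_mat_wit z D U (mat_adjoint U)" using assms by (intro similar_mat_witI[of _ _ n]) auto
  then show ?thesis unfolding similar_mat_def by blast
qed

lemma obtain_sign_enumeration: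
  assumes "finite P" "finite N" "P \<inter> N = {}"
  obtains f where "bij_betw f {..<card P + card N} (P \<union> N)"
    "\<And>k. k < card P + card N \<Longrightarrow> f k \<in> P \<longleftrightarrow> k < card P"
proof -
  obtain fP where fP: "bij_betw fP {0..<card P} P" using ex_bij_betw_nat_finite[OF assms(1)] by auto
  obtain fN where fN: "bij_betw fN {0..<card N} N" using ex_bij_betw_nat_finite[OF assms(2)] by auto
  define f where "f k = (if k < card P then fP k else fN (k - card P))" for k
  have "bij_betw f {0..<card P} P" using fP by (rule bij_betw_cong[THEN iffD1, rotated]) (auto simp: f_def)
  moreover have "bij_betw f {card P..<card P + card N} N"
  proof -
    have "bij_betw (\<lambda>k. k - card P) {card P..<card P + card N} {0..<card N}"
      by (rule bij_betw_byWitness[where f' = "\<lambda>k. k + card P"]) auto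
    from bij_betw_trans[OF this fN] show ?thesis by (rule bij_betw_cong[THEN iffD1, rotated]) (auto simp: f_def)
  qed
  ultimately have "bij_betw f ({0..<card P} \<union> {card P..<card P + card N}) (P \<union> N)"
    using assms(3) by (rule bij_betw_combine)
  moreover have "{0..<card P} \<union> {card P..<card P + card N} = {..<card P + card N}" by auto
  moreover have "f k \<in> P \<longleftrightarrow> k < card P" if "k < card P + card N" for k
    using that fP fN assms(3) unfolding f_def bij_betw_def by auto
  ultimately show ?thesis using that by auto
qed

lemma mult_Ipq_right:
  assumes "X \<in> carrier_mat m (p + q)"
  shows "X * Ipq p q = mat m (p + q) (\<lambda>(i, k). if k < p then X $$ (i, k) else - X $$ (i, k))"
proof (rule eq_matI)
  fix i k assume ik: "i < dim_row (mat m (p + q) (\<lambda>(i, k). if k < p then X $$ (i, k) else - X $$ (i, k)))"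
    "k < dim_col (mat m (p + q) (\<lambda>(i, k). if k < p then X $$ (i, k) else - X $$ (i, k)))"
  then have "(X * Ipq p q) $$ (i, k) = (\<Sum>l<p + q. X $$ (i, l) * Ipq p q $$ (l, k))"
    by (intro index_mult_mat_sum[OF assms Ipq_carrier]) auto
  also have "\<dots> = X $$ (i, k) * Ipq p q $$ (k, k)"
    using ik by (intro sum_eq_single) (auto simp: index_Ipq)
  finally show "(X * Ipq p q) $$ (i, k) = mat m (p + q) (\<lambda>(i, k). if k < p then X $$ (i, k) else - X $$ (i, k)) $$ (i, k)"
    using ik by (simp add: index_Ipq)
qed (use assms in auto)

lemma diagonal_signature_factorization:
  fixes D :: "complex mat"
  assumes D: "D \<in> carrier_mat m m" "diagonal_mat D" "\<forall>i<m. D $$ (i, i) \<in> \<real>"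
  defines "p \<equiv> card {i. i < m \<and> Re (D $$ (i, i)) > 0}" and "q \<equiv> card {i. i < m \<and> Re (D $$ (i, i)) < 0}"
  obtains S T where "S \<in> carrier_mat m (p + q)" "T \<in> carrier_mat (p + q) m" "T * S = 1\<^sub>m (p + q)"
    "D = S * Ipq p q * mat_adjoint S"
proof -
  let ?d = "\<lambda>i. Re (D $$ (i, i))"
  have Dd: "D $$ (i, i) = complex_of_real (?d i)" if "i < m" for i
    using D(3) that by (simp add: complex_is_Real_iff)
  obtain f where f: "bij_betw f {..<p + q} ({i. i < m \<and> ?d i > 0} \<union> {i. i < m \<and> ?d i < 0})"
    and f_pos: "\<And>k. k < p + q \<Longrightarrow> f k \<in> {i. i < m \<and> ?d i > 0} \<longleftrightarrow> k < p"
    by (rule obtain_sign_enumeration[of "{i. i < m \<and> ?d i > 0}" "{i. i < m \<and> ?d i < 0}",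
          folded p_def q_def]) auto
  have f_range: "f k < m" "?d (f k) \<noteq> 0" if "k < p + q" for k
  proof -
    have "f k \<in> {i. i < m \<and> ?d i > 0} \<union> {i. i < m \<and> ?d i < 0}"
      using bij_betw_apply[OF f] that by simp
    then show "f k < m" "?d (f k) \<noteq> 0" by auto
  qed
  have f_inj: "k = l" if "k < p + q" "l < p + q" "f k = f l" for k l
    using f that unfolding bij_betw_def inj_on_def by auto
  have f_surj: "\<exists>k<p + q. f k = i" if "i < m" "?d i \<noteq> 0" for i
  proof -
    have "i \<in> f ` {..<p + q}" using that bij_betw_imp_surj_on[OF f] by auto
    then show ?thesis by auto
  qed
  have f_sign: "(if k < p then 1 else -1) * \<bar>?d (f k)\<bar> = ?d (f k)" if "k < p + q" for k
    using f_pos[OF that] f_range[OF that] by auto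
  define s where "s i = complex_of_real (sqrt \<bar>?d i\<bar>)" for i
  define S where "S = mat m (p + q) (\<lambda>(i, k). if i = f k then s i else 0)"
  define T where "T = mat (p + q) m (\<lambda>(k, i). if i = f k then 1 / s i else 0)"
  have S: "S \<in> carrier_mat m (p + q)" and T: "T \<in> carrier_mat (p + q) m" unfolding S_def T_def by auto
  have s: "s (f k) \<noteq> 0" "cnj (s i) = s i" "s i * s i = complex_of_real \<bar>?d i\<bar>" if "k < p + q" for k i
    using f_range[OF that] unfolding s_def by (auto simp flip: of_real_mult)
  have "T * S = 1\<^sub>m (p + q)"
  proof (rule eq_matI)
    fix k l assume "k < dim_row (1\<^sub>m (p + q) :: complex mat)" "l < dim_col (1\<^sub>m (p + q) :: complex mat)"
    then have kl: "k < p + q" "l < p + q" by auto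
    have "(T * S) $$ (k, l) = (\<Sum>i<m. T $$ (k, i) * S $$ (i, l))"
      using kl by (intro index_mult_mat_sum[OF T S])
    also have "\<dots> = T $$ (k, f k) * S $$ (f k, l)"
      using kl f_range by (intro sum_eq_single) (auto simp: T_def)
    finally show "(T * S) $$ (k, l) = 1\<^sub>m (p + q) $$ (k, l)"
      using kl f_range s f_inj by (auto simp: T_def S_def)
  qed (use S T in auto)
  moreover have "S * Ipq p q * mat_adjoint S = D"
  proof (rule eq_matI)
    fix i j assume "i < dim_row D" "j < dim_col D"
    then have ij: "i < m" "j < m" using D by auto
    have "(S * Ipq p q * mat_adjoint S) $$ (i, j) =
        (\<Sum>k<p + q. (if k < p then 1 else -1) * S $$ (i, k) * cnj (S $$ (j, k)))"
      using ij S by (subst index_mult_mat_sum[of _ m "p + q" _ m]) (auto simp: mult_Ipq_right intro!: sum.cong)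
    also have "\<dots> = D $$ (i, j)"
    proof (cases "i = j \<and> ?d i \<noteq> 0")
      case True
      then obtain k where k: "k < p + q" "f k = i" using f_surj ij by auto
      have "(\<Sum>k<p + q. (if k < p then 1 else -1) * S $$ (i, k) * cnj (S $$ (j, k))) =
          (if k < p then 1 else -1) * S $$ (i, k) * cnj (S $$ (j, k))"
        using k True ij f_inj by (intro sum_eq_single) (auto simp: S_def)
      also have "\<dots> = D $$ (i, j)"
        using k True ij s[OF k(1)] f_sign[OF k(1)] Dd by (auto simp: S_def simp flip: of_real_mult)
      finally show ?thesis .
    next
      case False
      then have "D $$ (i, j) = 0"
        using D ij unfolding diagonal_mat_def by (cases "i = j") (auto simp: complex_eq_iff complex_is_Real_iff)
      moreover have "S $$ (i, k) * cnj (S $$ (j, k)) = 0" if "k < p + q" for k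
        using False ij that f_range[OF that] by (auto simp: S_def)
      ultimately show ?thesis by (simp add: mult.assoc sum.neutral)
    qed
    finally show "(S * Ipq p q * mat_adjoint S) $$ (i, j) = D $$ (i, j)" .
  qed (use S D in auto)
  ultimately show ?thesis using that S T by auto
qed

lemma hermitian_diagonalization_counts:
  fixes z :: "complex mat"
  assumes z: "z \<in> carrier_mat m m" and herm: "mat_adjoint z = z"
  obtains U D where "U \<in> carrier_mat m m" "mat_adjoint U * U = 1\<^sub>m m" "D \<in> carrier_mat m m"
    "diagonal_mat D" "\<forall>i<m. D $$ (i, i) \<in> \<real>" "z = U * D * mat_adjoint U"
    "num_pos_eig z = card {i. i < m \<and> Re (D $$ (i, i)) > 0}"
    "num_neg_eig z = card {i. i < m \<and> Re (D $$ (i, i)) < 0}"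
    "eig_mult z 0 = card {i. i < m \<and> Re (D $$ (i, i)) = 0}"
proof -
  obtain U D where U: "U \<in> carrier_mat m m" "mat_adjoint U * U = 1\<^sub>m m" and D: "D \<in> carrier_mat m m"
    "diagonal_mat D" "\<forall>i<m. D $$ (i, i) \<in> \<real>" and zU: "z = U * D * mat_adjoint U"
    using hermitian_unitary_diagonalization[OF z herm] by blast
  have ut: "upper_triangular D" using D unfolding diagonal_mat_def upper_triangular_def by auto
  have sim: "similar_mat z D" by (rule similar_mat_unitary[OF U D(1) zU])
  have real: "D $$ (i, i) = 0 \<longleftrightarrow> Re (D $$ (i, i)) = 0" if "i < m" for i
    using D(3) that by (auto simp: complex_eq_iff complex_is_Real_iff)
  have "num_pos_eig z = card {i. i < m \<and> D $$ (i, i) \<in> \<real> \<and> Re (D $$ (i, i)) > 0}"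
    unfolding num_pos_eig_def
    using sum_eig_mult_similar_upper_triangular[OF D(1) ut z sim, of "\<lambda>x. x \<in> \<real> \<and> Re x > 0"]
    by (simp add: conj_assoc)
  moreover have "num_neg_eig z = card {i. i < m \<and> D $$ (i, i) \<in> \<real> \<and> Re (D $$ (i, i)) < 0}"
    unfolding num_neg_eig_def
    using sum_eig_mult_similar_upper_triangular[OF D(1) ut z sim, of "\<lambda>x. x \<in> \<real> \<and> Re x < 0"]
    by (simp add: conj_assoc)
  moreover have "eig_mult z 0 = card {i. i < m \<and> D $$ (i, i) = 0}"
    by (rule eig_mult_similar_upper_triangular[OF D(1) ut z sim])
  moreover have "card {i. i < m \<and> D $$ (i, i) \<in> \<real> \<and> Re (D $$ (i, i)) > 0} = card {i. i < m \<and> Re (D $$ (i, i)) > 0}"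
    "card {i. i < m \<and> D $$ (i, i) \<in> \<real> \<and> Re (D $$ (i, i)) < 0} = card {i. i < m \<and> Re (D $$ (i, i)) < 0}"
    "card {i. i < m \<and> D $$ (i, i) = 0} = card {i. i < m \<and> Re (D $$ (i, i)) = 0}"
    using D(3) real by (auto intro!: arg_cong[where f = card])
  ultimately show ?thesis using that[OF U D zU] by simp
qed

lemma hermitian_inertia_sum:
  fixes z :: "complex mat"
  assumes "z \<in> carrier_mat m m" "mat_adjoint z = z"
  shows "num_pos_eig z + num_neg_eig z + eig_mult z 0 = m"
proof -
  obtain U D where "U \<in> carrier_mat m m" "mat_adjoint U * U = 1\<^sub>m m" "D \<in> carrier_mat m m"
    "diagonal_mat D" "\<forall>i<m. D $$ (i, i) \<in> \<real>" "z = U * D * mat_adjoint U" and counts: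
    "num_pos_eig z = card {i. i < m \<and> Re (D $$ (i, i)) > 0}"
    "num_neg_eig z = card {i. i < m \<and> Re (D $$ (i, i)) < 0}"
    "eig_mult z 0 = card {i. i < m \<and> Re (D $$ (i, i)) = 0}"
    by (rule hermitian_diagonalization_counts[OF assms])
  let ?P = "{i. i < m \<and> Re (D $$ (i, i)) > 0}" and ?N = "{i. i < m \<and> Re (D $$ (i, i)) < 0}"
    and ?Z = "{i. i < m \<and> Re (D $$ (i, i)) = 0}"
  have "{..<m} = (?P \<union> ?N) \<union> ?Z" by auto
  then have "m = card ((?P \<union> ?N) \<union> ?Z)" by (metis card_lessThan)
  also have "\<dots> = card ?P + card ?N + card ?Z"
    by (subst card_Un_disjoint; (subst card_Un_disjoint)?) auto
  finally show ?thesis unfolding counts by simp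
qed

lemma hermitian_signature_factorization:
  fixes z :: "complex mat"
  assumes z: "z \<in> carrier_mat m m" and herm: "mat_adjoint z = z"
  defines "p \<equiv> num_pos_eig z" and "q \<equiv> num_neg_eig z"
  obtains A L where "A \<in> carrier_mat m (p + q)" "L \<in> carrier_mat (p + q) m" "L * A = 1\<^sub>m (p + q)"
    "z = A * Ipq p q * mat_adjoint A"
proof -
  obtain U D where U: "U \<in> carrier_mat m m" "mat_adjoint U * U = 1\<^sub>m m" and D: "D \<in> carrier_mat m m"
    "diagonal_mat D" "\<forall>i<m. D $$ (i, i) \<in> \<real>" and zU: "z = U * D * mat_adjoint U"
    and pq: "p = card {i. i < m \<and> Re (D $$ (i, i)) > 0}" "q = card {i. i < m \<and> Re (D $$ (i, i)) < 0}"
    and "eig_mult z 0 = card {i. i < m \<and> Re (D $$ (i, i)) = 0}"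
    unfolding p_def q_def by (rule hermitian_diagonalization_counts[OF z herm])
  obtain S T where S: "S \<in> carrier_mat m (p + q)" and T: "T \<in> carrier_mat (p + q) m"
    and TS: "T * S = 1\<^sub>m (p + q)" and DS: "D = S * Ipq p q * mat_adjoint S"
    by (rule diagonal_signature_factorization[OF D, folded pq])
  have "(T * mat_adjoint U) * (U * S) = T * (mat_adjoint U * U) * S"
    using U(1) S T by (simp add: assoc_mult_mat_dims)
  then have "(T * mat_adjoint U) * (U * S) = 1\<^sub>m (p + q)" using U(2) S T TS by simp
  moreover have "z = (U * S) * Ipq p q * mat_adjoint (U * S)"
    unfolding zU DS by (rule congruence_mult[OF U(1) S Ipq_carrier, symmetric])
  moreover have "U * S \<in> carrier_mat m (p + q)" "T * mat_adjoint U \<in> carrier_mat (p + q) m"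
    using U(1) S T by auto
  ultimately show ?thesis using that by blast
qed

subsection \<open>Sylvester's law of inertia\<close>

lemma congruence_left_invertible_factor:
  fixes A A' :: "'a :: conjugatable_field mat"
  assumes A: "A \<in> carrier_mat m n" and L: "L \<in> carrier_mat n m" and LA: "L * A = 1\<^sub>m n"
    and A': "A' \<in> carrier_mat m n'" and L': "L' \<in> carrier_mat n' m" and LA': "L' * A' = 1\<^sub>m n'"
    and I: "I \<in> carrier_mat n n" and I': "I' \<in> carrier_mat n' n'" "I' * I' = 1\<^sub>m n'"
    and eq: "A * I * mat_adjoint A = A' * I' * mat_adjoint A'"
  shows "A' = A * (L * A')" and "I = (L * A') * I' * mat_adjoint (L * A')"
proof -
  note dims = carrier_matD[OF A] carrier_matD[OF L] carrier_matD[OF A'] carrier_matD[OF L']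
    carrier_matD[OF I] carrier_matD[OF I'(1)]
  have adj: "mat_adjoint A' * mat_adjoint L' = 1\<^sub>m n'" using mat_adjoint_mult[OF L' A'] LA' by simp
  \<comment> \<open>\<open>A * L\<close> fixes the column space of \<open>A * I * A\<^sup>*\<close>, which contains that of \<open>A'\<close>.\<close>
  have "A * L * (A * I * mat_adjoint A) = A * (L * A) * I * mat_adjoint A"
    by (simp add: assoc_mult_mat_dims dims)
  then have "A * L * (A' * I' * mat_adjoint A') = A' * I' * mat_adjoint A'" using LA A I eq by simp
  then have "A * L * (A' * I' * mat_adjoint A') * mat_adjoint L' * I' = A' * I' * mat_adjoint A' * mat_adjoint L' * I'"
    by simp
  then have "A * L * A' * I' * (mat_adjoint A' * mat_adjoint L') * I' = A' * I' * (mat_adjoint A' * mat_adjoint L') * I'"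
    by (simp add: assoc_mult_mat_dims dims)
  then have "A * L * A' * (I' * I') = A' * (I' * I')"
    unfolding adj using A L A' I' by (simp add: assoc_mult_mat_dims dims)
  then show "A' = A * (L * A')" using A L A' I' by (simp add: assoc_mult_mat_dims dims)
  have "I = (L * A) * I * mat_adjoint (L * A)" using LA I by simp
  also have "\<dots> = L * (A' * I' * mat_adjoint A') * mat_adjoint L"
    unfolding eq[symmetric] by (simp add: mat_adjoint_mult[OF L A] assoc_mult_mat_dims dims)
  also have "\<dots> = (L * A') * I' * mat_adjoint (L * A')"
    by (simp add: mat_adjoint_mult[OF L A'] assoc_mult_mat_dims dims)
  finally show "I = (L * A') * I' * mat_adjoint (L * A')" .
qed

lemma ex_nonzero_kernel_vec:
  fixes M :: "'a :: idom mat"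
  assumes M: "M \<in> carrier_mat k n" and kn: "k < n"
  obtains y where "y \<in> carrier_vec n" "y \<noteq> 0\<^sub>v n" "M *\<^sub>v y = 0\<^sub>v k"
proof -
  define M' where "M' = mat\<^sub>r n n (\<lambda>i. if i = n - 1 then 0\<^sub>v n else if i < k then row M i else 0\<^sub>v n)"
  have M': "M' \<in> carrier_mat n n" unfolding M'_def by auto
  have "det M' = 0" unfolding M'_def using kn M by (intro det_row_0) auto
  then obtain y where y: "y \<in> carrier_vec n" "y \<noteq> 0\<^sub>v n" "M' *\<^sub>v y = 0\<^sub>v n"
    using det_0_iff_vec_prod_zero[OF M'] by auto
  have "M *\<^sub>v y = 0\<^sub>v k"
  proof (rule eq_vecI)
    fix i assume "i < dim_vec (0\<^sub>v k :: 'a vec)"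
    then have i: "i < k" "i \<noteq> n - 1" using kn by auto
    have "(M' *\<^sub>v y) $ i = 0" using y(3) i kn by simp
    then show "(M *\<^sub>v y) $ i = 0\<^sub>v k $ i" using i kn M unfolding M'_def by simp
  qed (use M in simp)
  then show ?thesis using that y(1,2) by blast
qed

lemma Ipq_quadratic_form:
  assumes W: "W \<in> carrier_mat (p + q) 1"
  shows "(mat_adjoint W * Ipq p q * W) $$ (0, 0) =
    complex_of_real (\<Sum>k<p + q. (if k < p then 1 else -1) * (cmod (W $$ (k, 0)))\<^sup>2)"
proof -
  have "(mat_adjoint W * Ipq p q * W) $$ (0, 0) = (\<Sum>k<p + q. (mat_adjoint W * Ipq p q) $$ (0, k) * W $$ (k, 0))"
    using W by (intro index_mult_mat_sum[of _ 1 "p + q" _ 1]) auto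
  also have "\<dots> = (\<Sum>k<p + q. complex_of_real ((if k < p then 1 else -1) * (cmod (W $$ (k, 0)))\<^sup>2))"
    using W unfolding complex_norm_square of_real_mult
    by (intro sum.cong refl) (auto simp: mult_Ipq_right[of _ 1] mult.commute)
  finally show ?thesis by simp
qed

lemma Ipq_congruent_le:
  fixes u :: "complex mat"
  assumes u: "u \<in> carrier_mat n n" and n: "n = p + q" "n = p' + q'"
    and eq: "Ipq p q = u * Ipq p' q' * mat_adjoint u"
  shows "p \<le> p'"
proof (rule ccontr)
  assume "\<not> p \<le> p'"
  \<comment> \<open>Otherwise some \<open>y \<noteq> 0\<close> is supported on the first \<open>p\<close> coordinates while \<open>u\<^sup>* y\<close> vanishes on
     the first \<open>p'\<close> ones; the two sides of \<open>y\<^sup>* Ipq p q y = (u\<^sup>* y)\<^sup>* Ipq p' q' (u\<^sup>* y)\<close>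
     then have opposite signs.\<close>
  define M where "M = mat (p' + q) n (\<lambda>(k, j). if k < p' then cnj (u $$ (j, k)) else if j = p + (k - p') then 1 else 0)"
  obtain y where y: "y \<in> carrier_vec n" "y \<noteq> 0\<^sub>v n" "M *\<^sub>v y = 0\<^sub>v (p' + q)"
    using ex_nonzero_kernel_vec[of M "p' + q" n] \<open>\<not> p \<le> p'\<close> n unfolding M_def by auto
  have My: "(\<Sum>j<n. M $$ (k, j) * y $ j) = 0" if "k < p' + q" for k
    using arg_cong[OF y(3), of "\<lambda>v. v $ k"] that y(1) M_def
    by (simp add: scalar_prod_def lessThan_atLeast0)
  have y_tail: "y $ j = 0" if "p \<le> j" "j < n" for j
  proof -
    define k where "k = p' + (j - p)"
    have k: "\<not> k < p'" "p + (k - p') = j" "k < p' + q" using that n unfolding k_def by auto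
    have "(\<Sum>l<n. M $$ (k, l) * y $ l) = M $$ (k, j) * y $ j"
      using that n k by (intro sum_eq_single) (auto simp: M_def)
    then show ?thesis using My[OF k(3)] that k by (simp add: M_def)
  qed
  define Y where "Y = mat n 1 (\<lambda>(i, _). y $ i)"
  define W where "W = mat_adjoint u * Y"
  have Y: "Y \<in> carrier_mat n 1" and W: "W \<in> carrier_mat n 1" unfolding Y_def W_def using u by auto
  have W_head: "W $$ (k, 0) = 0" if "k < p'" for k
  proof -
    have "W $$ (k, 0) = (\<Sum>j<n. mat_adjoint u $$ (k, j) * Y $$ (j, 0))"
      unfolding W_def using u Y that n by (intro index_mult_mat_sum[of _ n n _ 1]) auto
    also have "\<dots> = (\<Sum>j<n. M $$ (k, j) * y $ j)"
      using u that n by (intro sum.cong refl) (auto simp: M_def Y_def)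
    finally show ?thesis using My[of k] that by simp
  qed
  have "mat_adjoint Y * Ipq p q * Y = mat_adjoint W * Ipq p' q' * W"
    unfolding eq W_def using u Y n
    by (simp add: mat_adjoint_mult[of _ n n _ 1] assoc_mult_mat_dims carrier_matD[OF u] carrier_matD[OF Y])
  then have "(mat_adjoint Y * Ipq p q * Y) $$ (0, 0) = (mat_adjoint W * Ipq p' q' * W) $$ (0, 0)" by simp
  then have "(\<Sum>k<p + q. (if k < p then 1 else -1) * (cmod (Y $$ (k, 0)))\<^sup>2) =
      (\<Sum>k<p' + q'. (if k < p' then 1 else -1) * (cmod (W $$ (k, 0)))\<^sup>2)"
    unfolding Ipq_quadratic_form[of Y p q, OF Y[unfolded n(1)]]
      Ipq_quadratic_form[of W p' q', OF W[unfolded n(2)]] of_real_eq_iff .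
  also have "\<dots> \<le> 0" by (intro sum_nonpos) (use W_head in auto)
  finally have "(\<Sum>k<p + q. (if k < p then 1 else -1) * (cmod (Y $$ (k, 0)))\<^sup>2) \<le> 0" .
  moreover obtain j where j: "j < n" "y $ j \<noteq> 0" using y(1,2) by (metis eq_vecI carrier_vecD index_zero_vec)
  have "(\<Sum>k<p + q. (if k < p then 1 else -1) * (cmod (Y $$ (k, 0)))\<^sup>2) =
      (\<Sum>k<p + q. if k < p then (cmod (y $ k))\<^sup>2 else 0)"
    using y_tail n by (intro sum.cong) (auto simp: Y_def)
  moreover have "j < p" using y_tail j by (meson not_le)
  then have "(cmod (y $ j))\<^sup>2 \<le> (\<Sum>k<p + q. if k < p then (cmod (y $ k))\<^sup>2 else 0)"
    using member_le_sum[of j "{..<p + q}" "\<lambda>k. if k < p then (cmod (y $ k))\<^sup>2 else 0"] j n by auto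
  moreover have "0 < (cmod (y $ j))\<^sup>2" using j(2) by simp
  ultimately show False by linarith
qed

lemma sylvester_law_of_inertia:
  fixes A A' :: "complex mat"
  assumes A: "A \<in> carrier_mat m (p + q)" and L: "L \<in> carrier_mat (p + q) m" and LA: "L * A = 1\<^sub>m (p + q)"
    and A': "A' \<in> carrier_mat m (p' + q')" and L': "L' \<in> carrier_mat (p' + q') m"
    and LA': "L' * A' = 1\<^sub>m (p' + q')"
    and eq: "A * Ipq p q * mat_adjoint A = A' * Ipq p' q' * mat_adjoint A'"
  shows "p = p'" and "q = q'"
proof -
  define u where "u = L * A'"
  define u' where "u' = L' * A"
  have u: "u \<in> carrier_mat (p + q) (p' + q')" and u': "u' \<in> carrier_mat (p' + q') (p + q)"
    unfolding u_def u'_def using A L A' L' by auto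
  note uniq = congruence_left_invertible_factor[OF A L LA A' L' LA' Ipq_carrier Ipq_carrier Ipq_mult_Ipq eq,
      folded u_def]
    congruence_left_invertible_factor[OF A' L' LA' A L LA Ipq_carrier Ipq_carrier Ipq_mult_Ipq eq[symmetric],
      folded u'_def]
  have "u * u' = 1\<^sub>m (p + q)" using uniq(3) LA L A' u' unfolding u_def by simp
  moreover have "u' * u = 1\<^sub>m (p' + q')" using uniq(1) LA' L' A u unfolding u'_def by simp
  ultimately have "p + q = p' + q'" using carrier_dims_eq_if_inverse[OF u u'] by blast
  moreover have "p \<le> p'" using Ipq_congruent_le[OF _ _ _ uniq(2)] u \<open>p + q = p' + q'\<close> by auto
  moreover have "p' \<le> p" using Ipq_congruent_le[OF _ _ _ uniq(4)] u' \<open>p + q = p' + q'\<close> by auto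
  ultimately show "p = p'" "q = q'" by auto
qed

lemma congruence_Ipq_in_Her:
  assumes A: "A \<in> carrier_mat m (p + q)" and L: "L \<in> carrier_mat (p + q) m" and LA: "L * A = 1\<^sub>m (p + q)"
  shows "A * Ipq p q * mat_adjoint A \<in> Her m p q (m - (p + q))"
proof -
  define z where "z = A * Ipq p q * mat_adjoint A"
  have z: "z \<in> carrier_mat m m" and herm: "mat_adjoint z = z"
    unfolding z_def using A hermitian_congruence[OF A Ipq_carrier] by auto
  obtain A' L' where "A' \<in> carrier_mat m (num_pos_eig z + num_neg_eig z)"
    "L' \<in> carrier_mat (num_pos_eig z + num_neg_eig z) m" "L' * A' = 1\<^sub>m (num_pos_eig z + num_neg_eig z)"
    "z = A' * Ipq (num_pos_eig z) (num_neg_eig z) * mat_adjoint A'"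
    by (rule hermitian_signature_factorization[OF z herm])
  then have "num_pos_eig z = p" "num_neg_eig z = q"
    using sylvester_law_of_inertia[OF A L LA] unfolding z_def by metis+
  then show ?thesis
    using z herm hermitian_inertia_sum[OF z herm] unfolding Her_def z_def by auto
qed

subsection \<open>Coordinate embeddings\<close>

definition index_embedding :: "nat \<Rightarrow> nat \<Rightarrow> (nat \<Rightarrow> nat) \<Rightarrow> bool" where
  "index_embedding m n e \<longleftrightarrow> strict_mono_on {..<n} e \<and> (\<forall>k<n. e k < m)"

lemma index_embedding_less: "index_embedding m n e \<Longrightarrow> k < n \<Longrightarrow> e k < m"
  unfolding index_embedding_def by auto

lemma index_embedding_less_iff:
  "index_embedding m n e \<Longrightarrow> k < n \<Longrightarrow> l < n \<Longrightarrow> e k < e l \<longleftrightarrow> k < l"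
  unfolding index_embedding_def using strict_mono_on_less[of "{..<n}" e k l] by auto

lemma index_embedding_eq_iff:
  "index_embedding m n e \<Longrightarrow> k < n \<Longrightarrow> l < n \<Longrightarrow> e k = e l \<longleftrightarrow> k = l"
  unfolding index_embedding_def using strict_mono_on_eqD by fastforce

definition embedding_mat :: "nat \<Rightarrow> nat \<Rightarrow> (nat \<Rightarrow> nat) \<Rightarrow> complex mat" where
  "embedding_mat m n e = mat m n (\<lambda>(i, k). if i = e k then 1 else 0)"

lemma embedding_mat_carrier [simp]: "embedding_mat m n e \<in> carrier_mat m n"
  by (simp add: embedding_mat_def)

lemma dim_embedding_mat [simp]: "dim_row (embedding_mat m n e) = m" "dim_col (embedding_mat m n e) = n"
  by (simp_all add: embedding_mat_def)

context
  fixes m n e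
  assumes e: "index_embedding m n e"
begin

lemma embedding_mat_mult_index:
  assumes X: "X \<in> carrier_mat n p" and k: "k < n" and j: "j < p"
  shows "(embedding_mat m n e * X) $$ (e k, j) = X $$ (k, j)"
proof -
  have "(embedding_mat m n e * X) $$ (e k, j) = (\<Sum>l<n. embedding_mat m n e $$ (e k, l) * X $$ (l, j))"
    using X j index_embedding_less[OF e k] by (intro index_mult_mat_sum) auto
  also have "\<dots> = embedding_mat m n e $$ (e k, k) * X $$ (k, j)"
    using k index_embedding_less[OF e k] index_embedding_eq_iff[OF e]
    by (intro sum_eq_single) (auto simp: embedding_mat_def)
  finally show ?thesis using k index_embedding_less[OF e k] by (simp add: embedding_mat_def)
qed

lemma embedding_mat_mult_index_outside:
  assumes X: "X \<in> carrier_mat n p" and i: "i < m" "i \<notin> e ` {..<n}" and j: "j < p"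
  shows "(embedding_mat m n e * X) $$ (i, j) = 0"
  using X i j by (subst index_mult_mat_sum[of _ m n _ p]) (auto simp: embedding_mat_def intro!: sum.neutral)

lemma mult_embedding_mat_index:
  assumes Y: "Y \<in> carrier_mat p m" and i: "i < p" and l: "l < n"
  shows "(Y * embedding_mat m n e) $$ (i, l) = Y $$ (i, e l)"
proof -
  have "(Y * embedding_mat m n e) $$ (i, l) = (\<Sum>j<m. Y $$ (i, j) * embedding_mat m n e $$ (j, l))"
    using Y i l by (intro index_mult_mat_sum) auto
  also have "\<dots> = Y $$ (i, e l) * embedding_mat m n e $$ (e l, l)"
    using l index_embedding_less[OF e l] by (intro sum_eq_single) (auto simp: embedding_mat_def)
  finally show ?thesis using l index_embedding_less[OF e l] by (simp add: embedding_mat_def)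
qed

lemma adjoint_embedding_mat_mult_index:
  assumes Y: "Y \<in> carrier_mat m p" and k: "k < n" and j: "j < p"
  shows "(mat_adjoint (embedding_mat m n e) * Y) $$ (k, j) = Y $$ (e k, j)"
proof -
  have "(mat_adjoint (embedding_mat m n e) * Y) $$ (k, j) =
      (\<Sum>i<m. mat_adjoint (embedding_mat m n e) $$ (k, i) * Y $$ (i, j))"
    using Y k j by (intro index_mult_mat_sum) auto
  also have "\<dots> = mat_adjoint (embedding_mat m n e) $$ (k, e k) * Y $$ (e k, j)"
    using k index_embedding_less[OF e k] by (intro sum_eq_single) (auto simp: embedding_mat_def)
  finally show ?thesis using k index_embedding_less[OF e k] by (simp add: embedding_mat_def)
qed

lemma adjoint_embedding_mat_mult_self: "mat_adjoint (embedding_mat m n e) * embedding_mat m n e = 1\<^sub>m n"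
proof (rule eq_matI)
  fix k l assume "k < dim_row (1\<^sub>m n :: complex mat)" "l < dim_col (1\<^sub>m n :: complex mat)"
  then have kl: "k < n" "l < n" by auto
  then have "(mat_adjoint (embedding_mat m n e) * embedding_mat m n e) $$ (k, l) = embedding_mat m n e $$ (e k, l)"
    by (intro adjoint_embedding_mat_mult_index) auto
  then show "(mat_adjoint (embedding_mat m n e) * embedding_mat m n e) $$ (k, l) = 1\<^sub>m n $$ (k, l)"
    using kl index_embedding_less[OF e] index_embedding_eq_iff[OF e] by (simp add: embedding_mat_def)
qed auto

end

lemma compress_mat_index:
  assumes e: "index_embedding m n e" and f: "index_embedding m n' f"
    and X: "X \<in> carrier_mat m m" and k: "k < n" and l: "l < n'"
  shows "(mat_adjoint (embedding_mat m n e) * X * embedding_mat m n' f) $$ (k, l) = X $$ (e k, f l)"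
proof -
  have "(mat_adjoint (embedding_mat m n e) * X * embedding_mat m n' f) $$ (k, l) =
      (mat_adjoint (embedding_mat m n e) * X) $$ (k, f l)"
    using X k l by (intro mult_embedding_mat_index[OF f]) auto
  also have "\<dots> = X $$ (e k, f l)"
    by (rule adjoint_embedding_mat_mult_index[OF e X k index_embedding_less[OF f l]])
  finally show ?thesis .
qed

definition borel_extension :: "nat \<Rightarrow> nat \<Rightarrow> (nat \<Rightarrow> nat) \<Rightarrow> complex mat \<Rightarrow> complex mat" where
  "borel_extension m n e b = mat m m (\<lambda>(i, j).
     if i \<in> e ` {..<n} \<and> j \<in> e ` {..<n} then b $$ (inv_into {..<n} e i, inv_into {..<n} e j)
     else if i = j then 1 else 0)"

context
  fixes m n e
  assumes e: "index_embedding m n e"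
begin

lemma inj_on_index_embedding: "inj_on e {..<n}"
  using index_embedding_eq_iff[OF e] by (auto intro: inj_onI)

lemma borel_extension_index:
  "k < n \<Longrightarrow> l < n \<Longrightarrow> borel_extension m n e b $$ (e k, e l) = b $$ (k, l)"
  using index_embedding_less[OF e] inv_into_f_f[OF inj_on_index_embedding]
  by (simp add: borel_extension_def)

lemma borel_extension_Borel:
  assumes b: "b \<in> Borel n"
  shows "borel_extension m n e b \<in> Borel m"
proof (rule BorelI)
  fix i j assume ij: "j < i" "i < m"
  show "borel_extension m n e b $$ (i, j) = 0"
  proof (cases "i \<in> e ` {..<n} \<and> j \<in> e ` {..<n}")
    case True
    then obtain k l where kl: "k < n" "l < n" "i = e k" "j = e l" by auto
    then have "l < k" using index_embedding_less_iff[OF e kl(2,1)] ij by simp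
    then show ?thesis using kl borel_extension_index Borel_lower_zero[OF b] by simp
  qed (use ij in \<open>auto simp: borel_extension_def\<close>)
next
  fix i assume i: "i < m"
  show "borel_extension m n e b $$ (i, i) \<noteq> 0"
  proof (cases "i \<in> e ` {..<n}")
    case True
    then obtain k where "k < n" "i = e k" by auto
    then show ?thesis using borel_extension_index Borel_diag_nonzero[OF b] by simp
  qed (use i in \<open>auto simp: borel_extension_def\<close>)
qed (simp add: borel_extension_def)

lemma borel_extension_mult_embedding_mat:
  assumes b: "b \<in> carrier_mat n n"
  shows "borel_extension m n e b * embedding_mat m n e = embedding_mat m n e * b"
proof (rule eq_matI)
  fix i k assume "i < dim_row (embedding_mat m n e * b)" "k < dim_col (embedding_mat m n e * b)"
  then have ik: "i < m" "k < n" using b by auto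
  have "(borel_extension m n e b * embedding_mat m n e) $$ (i, k) = borel_extension m n e b $$ (i, e k)"
    using ik by (intro mult_embedding_mat_index[OF e]) (auto simp: borel_extension_def)
  also have "\<dots> = (embedding_mat m n e * b) $$ (i, k)"
  proof (cases "i \<in> e ` {..<n}")
    case True
    then obtain l where "l < n" "i = e l" by auto
    then show ?thesis
      using ik b by (simp add: borel_extension_index embedding_mat_mult_index[OF e] del: index_mult_mat(1))
  next
    case False
    then show ?thesis using ik b index_embedding_less[OF e]
      by (auto simp: borel_extension_def embedding_mat_mult_index_outside[OF e] simp del: index_mult_mat(1))
  qed
  finally show "(borel_extension m n e b * embedding_mat m n e) $$ (i, k) = (embedding_mat m n e * b) $$ (i, k)" .
qed (use b in \<open>auto simp: borel_extension_def\<close>)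

lemma compress_Borel:
  assumes b: "b \<in> Borel m"
  shows "mat_adjoint (embedding_mat m n e) * b * embedding_mat m n e \<in> Borel n"
  using Borel_carrier[OF b] index_embedding_less[OF e] index_embedding_less_iff[OF e]
    Borel_lower_zero[OF b] Borel_diag_nonzero[OF b]
  by (intro BorelI) (auto simp: compress_mat_index[OF e e] simp del: index_mult_mat(1))

end

lemma embedding_range_subset_if_Borel_inverse:
  assumes e: "index_embedding m n e" and f: "index_embedding m n f" and b: "b \<in> Borel m" and c: "c \<in> Borel m"
    and inv: "mat_adjoint (embedding_mat m n e) * c * embedding_mat m n f *
      (mat_adjoint (embedding_mat m n f) * b * embedding_mat m n e) = 1\<^sub>m n"
  shows "e ` {..<n} \<subseteq> f ` {..<n}"
proof (rule ccontr)
  assume "\<not> e ` {..<n} \<subseteq> f ` {..<n}"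
  then obtain k where k: "k < n" "e k \<notin> f ` {..<n}" by auto
  have bc: "b \<in> carrier_mat m m" "c \<in> carrier_mat m m" using b c Borel_carrier by auto
  have "1 = (\<Sum>l<n. (mat_adjoint (embedding_mat m n e) * c * embedding_mat m n f) $$ (k, l) *
      (mat_adjoint (embedding_mat m n f) * b * embedding_mat m n e) $$ (l, k))"
    using arg_cong[OF inv, of "\<lambda>X. X $$ (k, k)"] bc k by (subst (asm) index_mult_mat_sum[of _ n n _ n]) auto
  also have "\<dots> = (\<Sum>l<n. c $$ (e k, f l) * b $$ (f l, e k))"
    using bc k by (intro sum.cong refl)
      (simp add: compress_mat_index[OF e f] compress_mat_index[OF f e] del: index_mult_mat(1))
  \<comment> \<open>Being upper triangular, \<open>c\<close> and \<open>b\<close> let only a row \<open>f l = e k\<close> contribute.\<close>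
  also have "\<dots> = 0"
  proof (intro sum.neutral ballI)
    fix l assume l: "l \<in> {..<n}"
    then have "f l < e k \<or> e k < f l" using k by (metis image_eqI linorder_neqE_nat)
    then show "c $$ (e k, f l) * b $$ (f l, e k) = 0"
      using Borel_lower_zero[OF c] Borel_lower_zero[OF b] index_embedding_less[OF e k(1)]
        index_embedding_less[OF f] l by auto
  qed
  finally show False by simp
qed

subsection \<open>Row reduction by the Borel subgroup\<close>

definition rows_independent :: "complex mat \<Rightarrow> nat set \<Rightarrow> bool" where
  "rows_independent B R \<longleftrightarrow> (\<forall>c. (\<forall>j<dim_col B. (\<Sum>i\<in>R. c i * B $$ (i, j)) = 0) \<longrightarrow> (\<forall>i\<in>R. c i = 0))"

definition independent_row_support :: "complex mat \<Rightarrow> nat set \<Rightarrow> bool" where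
  "independent_row_support B R \<longleftrightarrow> R \<subseteq> {..<dim_row B} \<and> rows_independent B R \<and>
     (\<forall>i<dim_row B. i \<notin> R \<longrightarrow> (\<forall>j<dim_col B. B $$ (i, j) = 0))"

definition tail_rows :: "complex mat \<Rightarrow> complex mat" where
  "tail_rows A = mat (dim_row A - 1) (dim_col A) (\<lambda>(i, j). A $$ (Suc i, j))"

definition borel_cons :: "nat \<Rightarrow> (nat \<Rightarrow> complex) \<Rightarrow> complex mat \<Rightarrow> complex mat" where
  "borel_cons m d b = mat (Suc m) (Suc m)
     (\<lambda>(i, j). if i = 0 then (if j = 0 then 1 else d (j - 1)) else if j = 0 then 0 else b $$ (i - 1, j - 1))"

lemma borel_cons_Borel: "b \<in> Borel m \<Longrightarrow> borel_cons m d b \<in> Borel (Suc m)"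
  by (intro BorelI) (auto simp: borel_cons_def Borel_lower_zero Borel_diag_nonzero gr0_conv_Suc)

lemma borel_cons_mult_index:
  assumes A: "A \<in> carrier_mat (Suc m) n" and b: "b \<in> carrier_mat m m" and j: "j < n"
  shows "(borel_cons m d b * A) $$ (0, j) = A $$ (0, j) + (\<Sum>l<m. d l * A $$ (Suc l, j))"
    and "i < m \<Longrightarrow> (borel_cons m d b * A) $$ (Suc i, j) = (b * tail_rows A) $$ (i, j)"
proof -
  have split: "(borel_cons m d b * A) $$ (i, j) =
      borel_cons m d b $$ (i, 0) * A $$ (0, j) + (\<Sum>l<m. borel_cons m d b $$ (i, Suc l) * A $$ (Suc l, j))"
    if "i < Suc m" for i
  proof -
    have "(borel_cons m d b * A) $$ (i, j) = (\<Sum>l<Suc m. borel_cons m d b $$ (i, l) * A $$ (l, j))"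
      using A j that by (intro index_mult_mat_sum) (auto simp: borel_cons_def)
    then show ?thesis by (simp only: sum.lessThan_Suc_shift)
  qed
  show "(borel_cons m d b * A) $$ (0, j) = A $$ (0, j) + (\<Sum>l<m. d l * A $$ (Suc l, j))"
    using split[of 0] by (simp add: borel_cons_def)
  assume i: "i < m"
  have "(b * tail_rows A) $$ (i, j) = (\<Sum>l<m. b $$ (i, l) * A $$ (Suc l, j))"
    using A b i j by (simp add: index_mult_mat_sum[of _ m m _ n] tail_rows_def del: index_mult_mat(1))
  then show "(borel_cons m d b * A) $$ (Suc i, j) = (b * tail_rows A) $$ (i, j)"
    using split[of "Suc i"] i by (simp add: borel_cons_def)
qed

lemma rows_independentD:
  "rows_independent B R \<Longrightarrow> (\<And>j. j < dim_col B \<Longrightarrow> (\<Sum>i\<in>R. c i * B $$ (i, j)) = 0) \<Longrightarrow> i \<in> R \<Longrightarrow> c i = 0"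
  unfolding rows_independent_def by blast

lemma independent_row_supportD:
  assumes "independent_row_support B R"
  shows "R \<subseteq> {..<dim_row B}" "rows_independent B R"
    "\<And>i j. i < dim_row B \<Longrightarrow> i \<notin> R \<Longrightarrow> j < dim_col B \<Longrightarrow> B $$ (i, j) = 0"
  using assms unfolding independent_row_support_def by auto

lemma tail_rows_carrier: "A \<in> carrier_mat (Suc m) n \<Longrightarrow> tail_rows A \<in> carrier_mat m n"
  by (auto simp: tail_rows_def)

lemma sum_Suc_rows_borel_cons:
  assumes A: "A \<in> carrier_mat (Suc m) n" and b: "b \<in> carrier_mat m m" and R: "R \<subseteq> {..<m}" and j: "j < n"
  shows "(\<Sum>i\<in>Suc ` R. c i * (borel_cons m d b * A) $$ (i, j)) = (\<Sum>i\<in>R. c (Suc i) * (b * tail_rows A) $$ (i, j))"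
  using R borel_cons_mult_index(2)[OF A b j] by (subst sum.reindex) (auto intro!: sum.cong)

lemma independent_row_support_borel_cons_dependent:
  assumes A: "A \<in> carrier_mat (Suc m) n" and b: "b \<in> carrier_mat m m"
    and S: "independent_row_support (b * tail_rows A) R"
    and c: "\<And>j. j < n \<Longrightarrow> A $$ (0, j) = (\<Sum>i\<in>R. c i * (b * tail_rows A) $$ (i, j))"
  shows "independent_row_support (borel_cons m (\<lambda>l. - (\<Sum>i\<in>R. c i * b $$ (i, l))) b * A) (Suc ` R)"
proof -
  define d where "d l = - (\<Sum>i\<in>R. c i * b $$ (i, l))" for l
  let ?B = "b * tail_rows A"
  have B: "?B \<in> carrier_mat m n" using b tail_rows_carrier[OF A] by auto
  have R: "R \<subseteq> {..<m}" using independent_row_supportD(1)[OF S] b by auto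
  have row0: "(borel_cons m d b * A) $$ (0, j) = 0" if j: "j < n" for j
  proof -
    have "(\<Sum>l<m. d l * A $$ (Suc l, j)) = - (\<Sum>l<m. \<Sum>i\<in>R. c i * b $$ (i, l) * A $$ (Suc l, j))"
      unfolding d_def by (simp add: sum_distrib_right sum_negf)
    also have "\<dots> = - (\<Sum>i\<in>R. c i * (\<Sum>l<m. b $$ (i, l) * A $$ (Suc l, j)))"
      by (subst sum.swap) (simp add: sum_distrib_left mult.assoc)
    also have "\<dots> = - A $$ (0, j)"
      using R b A j by (simp add: c index_mult_mat_sum[of _ m m _ n] tail_rows_def subset_eq del: index_mult_mat(1))
    finally show ?thesis using borel_cons_mult_index(1)[OF A b j] by simp
  qed
  show ?thesis
    unfolding independent_row_support_def rows_independent_def d_def[symmetric]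
  proof (intro conjI allI impI)
    show "Suc ` R \<subseteq> {..<dim_row (borel_cons m d b * A)}" using R by (auto simp: borel_cons_def)
  next
    fix c' assume "\<forall>j<dim_col (borel_cons m d b * A). (\<Sum>i\<in>Suc ` R. c' i * (borel_cons m d b * A) $$ (i, j)) = 0"
    then have "(\<Sum>i\<in>R. c' (Suc i) * ?B $$ (i, j)) = 0" if "j < dim_col ?B" for j
      using that A B sum_Suc_rows_borel_cons[OF A b R] by auto
    then show "\<forall>i\<in>Suc ` R. c' i = 0"
      using rows_independentD[OF independent_row_supportD(2)[OF S], of "\<lambda>i. c' (Suc i)"] by blast
  next
    fix i j assume i: "i < dim_row (borel_cons m d b * A)" "i \<notin> Suc ` R" and j: "j < dim_col (borel_cons m d b * A)"
    show "(borel_cons m d b * A) $$ (i, j) = 0"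
    proof (cases i)
      case (Suc i')
      then have i': "i' < m" "i' \<notin> R" "j < n" using i j A by (auto simp: borel_cons_def)
      have "(b * tail_rows A) $$ (i', j) = 0" by (rule independent_row_supportD(3)[OF S]) (use i' B in auto)
      then show ?thesis using Suc borel_cons_mult_index(2)[OF A b i'(3) i'(1)] by simp
    qed (use row0 j A in simp)
  qed
qed

lemma independent_row_support_borel_cons_independent:
  assumes A: "A \<in> carrier_mat (Suc m) n" and b: "b \<in> carrier_mat m m"
    and S: "independent_row_support (b * tail_rows A) R"
    and nc: "\<And>c. \<not> (\<forall>j<n. A $$ (0, j) = (\<Sum>i\<in>R. c i * (b * tail_rows A) $$ (i, j)))"
  shows "independent_row_support (borel_cons m (\<lambda>_. 0) b * A) (insert 0 (Suc ` R))"
proof -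
  let ?B = "b * tail_rows A" and ?b = "borel_cons m (\<lambda>_. 0) b"
  have B: "?B \<in> carrier_mat m n" using b tail_rows_carrier[OF A] by auto
  have R: "R \<subseteq> {..<m}" "finite R"
    using independent_row_supportD(1)[OF S] b by (auto intro: finite_subset)
  show ?thesis
    unfolding independent_row_support_def rows_independent_def
  proof (intro conjI allI impI)
    show "insert 0 (Suc ` R) \<subseteq> {..<dim_row (?b * A)}" using R by (auto simp: borel_cons_def)
  next
    fix c' assume h: "\<forall>j<dim_col (?b * A). (\<Sum>i\<in>insert 0 (Suc ` R). c' i * (?b * A) $$ (i, j)) = 0"
    have h': "c' 0 * A $$ (0, j) + (\<Sum>i\<in>R. c' (Suc i) * ?B $$ (i, j)) = 0" if j: "j < n" for j
      using h[rule_format, of j] j A R borel_cons_mult_index(1)[OF A b j] sum_Suc_rows_borel_cons[OF A b R(1) j]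
      by (simp add: sum.insert_if image_iff)
    \<comment> \<open>A nonzero coefficient of row \<open>0\<close> would express row \<open>0\<close> of \<open>A\<close> through the rows of \<open>?B\<close>.\<close>
    have c0: "c' 0 = 0"
    proof (rule ccontr)
      assume "c' 0 \<noteq> 0"
      have "A $$ (0, j) = (\<Sum>i\<in>R. (- c' (Suc i) / c' 0) * ?B $$ (i, j))" if "j < n" for j
      proof -
        have "c' 0 * A $$ (0, j) = - (\<Sum>i\<in>R. c' (Suc i) * ?B $$ (i, j))"
          using h'[OF that] by (simp add: eq_neg_iff_add_eq_0)
        then have "A $$ (0, j) = - (\<Sum>i\<in>R. c' (Suc i) * ?B $$ (i, j)) / c' 0"
          using \<open>c' 0 \<noteq> 0\<close> by (simp add: field_simps)
        then show ?thesis by (simp add: sum_divide_distrib sum_negf)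
      qed
      then show False using nc[of "\<lambda>i. - c' (Suc i) / c' 0"] by blast
    qed
    then have "(\<Sum>i\<in>R. c' (Suc i) * ?B $$ (i, j)) = 0" if "j < dim_col ?B" for j
      using that h' B by auto
    then have "\<forall>i\<in>R. c' (Suc i) = 0"
      using rows_independentD[OF independent_row_supportD(2)[OF S], of "\<lambda>i. c' (Suc i)"] by blast
    then show "\<forall>i\<in>insert 0 (Suc ` R). c' i = 0" using c0 by auto
  next
    fix i j assume i: "i < dim_row (?b * A)" "i \<notin> insert 0 (Suc ` R)" and j: "j < dim_col (?b * A)"
    then obtain i' where i': "i = Suc i'" "i' \<notin> R" "i' < m" "j < n" using A by (cases i) (auto simp: borel_cons_def)
    have "(b * tail_rows A) $$ (i', j) = 0" by (rule independent_row_supportD(3)[OF S]) (use i' B in auto)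
    then show "(?b * A) $$ (i, j) = 0" using i' borel_cons_mult_index(2)[OF A b i'(4) i'(3)] by simp
  qed
qed

lemma borel_row_reduction:
  assumes "A \<in> carrier_mat m n"
  shows "\<exists>b R. b \<in> Borel m \<and> independent_row_support (b * A) R"
  using assms
proof (induction m arbitrary: A)
  case 0
  then show ?case
    by (intro exI[of _ "1\<^sub>m 0"] exI[of _ "{}"]) (auto simp: Borel_one independent_row_support_def rows_independent_def)
next
  case (Suc m)
  obtain b R where b: "b \<in> Borel m" and S: "independent_row_support (b * tail_rows A) R"
    using Suc.IH[OF tail_rows_carrier[OF Suc.prems]] by blast
  note bc = Borel_carrier[OF b]
  show ?case
  proof (cases "\<exists>c. \<forall>j<n. A $$ (0, j) = (\<Sum>i\<in>R. c i * (b * tail_rows A) $$ (i, j))")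
    case True
    then obtain c where "\<And>j. j < n \<Longrightarrow> A $$ (0, j) = (\<Sum>i\<in>R. c i * (b * tail_rows A) $$ (i, j))" by blast
    from independent_row_support_borel_cons_dependent[OF Suc.prems bc S this] borel_cons_Borel[OF b]
    show ?thesis by blast
  next
    case False
    from independent_row_support_borel_cons_independent[OF Suc.prems bc S] False borel_cons_Borel[OF b]
    show ?thesis by blast
  qed
qed

text \<open>The subsets \<open>J \<subseteq> {1..m}\<close> are \<open>1\<close>-based while matrix rows are \<open>0\<close>-based; \<open>row_index J k\<close>
  is the row of the \<open>k\<close>-th smallest element of \<open>J\<close>.\<close>

definition row_index :: "nat set \<Rightarrow> nat \<Rightarrow> nat" where
  "row_index J k = sorted_list_of_set J ! k - 1"

lemma
  assumes J: "J \<subseteq> {1..m}"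
  shows index_embedding_row_index: "index_embedding m (card J) (row_index J)"
    and Suc_row_index_image: "Suc ` row_index J ` {..<card J} = J"
proof -
  define xs where "xs = sorted_list_of_set J"
  have fin: "finite J" using J finite_subset by blast
  have xs: "set xs = J" "length xs = card J" "sorted_wrt (<) xs" unfolding xs_def using fin by auto
  have mem: "xs ! k \<in> J" if "k < card J" for k using xs that nth_mem by metis
  have rng: "1 \<le> xs ! k" "xs ! k \<le> m" if "k < card J" for k using mem[OF that] J by auto
  show "index_embedding m (card J) (row_index J)"
    unfolding index_embedding_def row_index_def xs_def[symmetric]
  proof (intro conjI allI impI strict_mono_onI)
    fix k l assume "k \<in> {..<card J}" "l \<in> {..<card J}" "k < l"
    then have "xs ! k < xs ! l" using sorted_wrt_nth_less[OF xs(3)] xs(2) by auto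
    then show "xs ! k - 1 < xs ! l - 1" using rng[of k] \<open>k < l\<close> \<open>l \<in> {..<card J}\<close> by auto
  next
    fix k assume "k < card J"
    then show "xs ! k - 1 < m" using rng[of k] by linarith
  qed
  have "Suc (row_index J k) = xs ! k" if "k \<in> {..<length xs}" for k
    using rng(1)[of k] that xs(2) unfolding row_index_def xs_def[symmetric] by simp
  then have "Suc ` row_index J ` {..<card J} = (!) xs ` {..<length xs}"
    unfolding image_image xs(2) by (rule image_cong[OF refl])
  then show "Suc ` row_index J ` {..<card J} = J" using xs(1) by (auto simp: set_conv_nth)
qed

lemma rows_independent_left_inverse_imp_inverse:
  assumes g: "g \<in> carrier_mat n' n" and M: "M \<in> carrier_mat n n'" and Mg: "M * g = 1\<^sub>m n"
    and indep: "rows_independent g {..<n'}"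
  shows "g * M = 1\<^sub>m n'"
proof (rule eq_matI)
  fix k l assume "k < dim_row (1\<^sub>m n' :: complex mat)" "l < dim_col (1\<^sub>m n' :: complex mat)"
  then have kl: "k < n'" "l < n'" by auto
  \<comment> \<open>Row \<open>k\<close> of \<open>g * M - 1\<close> is a dependency among the rows of \<open>g\<close>, because \<open>(g * M) * g = g\<close>.\<close>
  define v where "v l' = (g * M) $$ (k, l') - 1\<^sub>m n' $$ (k, l')" for l'
  have "(\<Sum>l'\<in>{..<n'}. v l' * g $$ (l', j)) = 0" if j: "j < dim_col g" for j
  proof -
    have "(\<Sum>l'<n'. v l' * g $$ (l', j)) =
        (\<Sum>l'<n'. (g * M) $$ (k, l') * g $$ (l', j)) - (\<Sum>l'<n'. 1\<^sub>m n' $$ (k, l') * g $$ (l', j))"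
      by (simp add: v_def left_diff_distrib sum_subtractf)
    also have "(\<Sum>l'<n'. (g * M) $$ (k, l') * g $$ (l', j)) = ((g * M) * g) $$ (k, j)"
      using g M kl j by (intro index_mult_mat_sum[symmetric]) auto
    also have "(g * M) * g = g" using Mg g M by (simp add: assoc_mult_mat_dims)
    also have "(\<Sum>l'<n'. 1\<^sub>m n' $$ (k, l') * g $$ (l', j)) = 1\<^sub>m n' $$ (k, k) * g $$ (k, j)"
      using kl by (intro sum_eq_single) auto
    finally show ?thesis using kl by simp
  qed
  then have "v l = 0" using rows_independentD[OF indep] kl by blast
  then show "(g * M) $$ (k, l) = 1\<^sub>m n' $$ (k, l)" unfolding v_def by simp
qed (use g M in auto)

context
  fixes m n e
  assumes e: "index_embedding m n e"
begin

lemma embedding_mat_mult_compress: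
  assumes B: "B \<in> carrier_mat m p" and zero: "\<And>i j. i < m \<Longrightarrow> i \<notin> e ` {..<n} \<Longrightarrow> j < p \<Longrightarrow> B $$ (i, j) = 0"
  shows "embedding_mat m n e * (mat_adjoint (embedding_mat m n e) * B) = B"
proof (rule eq_matI)
  fix i j assume "i < dim_row B" "j < dim_col B"
  then have ij: "i < m" "j < p" using B by auto
  have C: "mat_adjoint (embedding_mat m n e) * B \<in> carrier_mat n p" using B by auto
  show "(embedding_mat m n e * (mat_adjoint (embedding_mat m n e) * B)) $$ (i, j) = B $$ (i, j)"
  proof (cases "i \<in> e ` {..<n}")
    case True
    then obtain k where "k < n" "i = e k" by auto
    then show ?thesis
      using ij B C by (simp add: embedding_mat_mult_index[OF e] adjoint_embedding_mat_mult_index[OF e]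
          del: index_mult_mat(1))
  next
    case False
    then show ?thesis
      using ij C zero by (simp add: embedding_mat_mult_index_outside[OF e] del: index_mult_mat(1))
  qed
qed (use B in auto)

lemma rows_independent_compress:
  assumes B: "B \<in> carrier_mat m p" and indep: "rows_independent B (e ` {..<n})"
  shows "rows_independent (mat_adjoint (embedding_mat m n e) * B) {..<n}"
  unfolding rows_independent_def
proof (intro allI impI ballI)
  fix c k assume h: "\<forall>j<dim_col (mat_adjoint (embedding_mat m n e) * B).
      (\<Sum>k\<in>{..<n}. c k * (mat_adjoint (embedding_mat m n e) * B) $$ (k, j)) = 0" and k: "k \<in> {..<n}"
  have inj: "inj_on e {..<n}" by (rule inj_on_index_embedding[OF e])
  have sum_zero: "(\<Sum>i\<in>e ` {..<n}. c (the_inv_into {..<n} e i) * B $$ (i, j)) = 0" if j: "j < p" for j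
  proof -
    have "(\<Sum>i\<in>e ` {..<n}. c (the_inv_into {..<n} e i) * B $$ (i, j)) =
        (\<Sum>k<n. c (the_inv_into {..<n} e (e k)) * B $$ (e k, j))"
      by (rule sum.reindex[OF inj, unfolded comp_def])
    also have "\<dots> = (\<Sum>k<n. c k * (mat_adjoint (embedding_mat m n e) * B) $$ (k, j))"
      using B j by (intro sum.cong refl)
        (simp add: the_inv_into_f_f[OF inj] adjoint_embedding_mat_mult_index[OF e] del: index_mult_mat(1))
    also have "\<dots> = 0" using h B j by simp
    finally show ?thesis .
  qed
  have "c (the_inv_into {..<n} e (e k)) = 0"
    by (rule rows_independentD[OF indep, of "\<lambda>i. c (the_inv_into {..<n} e i)"]) (use sum_zero B k in auto)
  then show "c k = 0" using the_inv_into_f_f[OF inj] k by simp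
qed

end

lemma borel_embedding_factorization:
  assumes A: "A \<in> carrier_mat m n" and L: "L \<in> carrier_mat n m" and LA: "L * A = 1\<^sub>m n"
  obtains b J g where "b \<in> Borel m" "J \<subseteq> {1..m}" "card J = n" "g \<in> GLc n"
    "b * A = embedding_mat m n (row_index J) * g"
proof -
  obtain b R where b: "b \<in> Borel m" and S: "independent_row_support (b * A) R"
    using borel_row_reduction[OF A] by blast
  obtain c where c: "c \<in> Borel m" "c * b = 1\<^sub>m m" by (rule Borel_inverse[OF b])
  have bc: "b \<in> carrier_mat m m" "c \<in> carrier_mat m m" using b c Borel_carrier by auto
  have B: "b * A \<in> carrier_mat m n" using bc A by auto
  define J where "J = Suc ` R"
  have J: "J \<subseteq> {1..m}" using independent_row_supportD(1)[OF S] bc unfolding J_def by auto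
  define e where "e = row_index J"
  define E where "E = embedding_mat m (card J) e"
  have e: "index_embedding m (card J) e" unfolding e_def by (rule index_embedding_row_index[OF J])
  have range: "e ` {..<card J} = R"
    using Suc_row_index_image[OF J] unfolding e_def J_def by (simp add: inj_image_eq_iff)
  define g where "g = mat_adjoint E * (b * A)"
  have g: "g \<in> carrier_mat (card J) n"
    unfolding g_def E_def by (intro mult_carrier_mat[OF carrier_mat_adjoint[OF embedding_mat_carrier] B])
  have Eg: "E * g = b * A" unfolding E_def g_def
    by (rule embedding_mat_mult_compress[OF e B], rule independent_row_supportD(3)[OF S]) (use range B in auto)
  define M where "M = L * c * E"
  have M: "M \<in> carrier_mat n (card J)"
    unfolding M_def E_def by (rule mult_carrier_mat[OF mult_carrier_mat[OF L bc(2)] embedding_mat_carrier])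
  have "M * g = L * (c * (E * g))"
    unfolding M_def using L bc g unfolding E_def by (simp add: assoc_mult_mat_dims)
  also have "\<dots> = L * ((c * b) * A)" unfolding Eg using bc A by (simp add: assoc_mult_mat_dims)
  finally have Mg: "M * g = 1\<^sub>m n" using c(2) A LA by simp
  have "g * M = 1\<^sub>m (card J)"
    using rows_independent_left_inverse_imp_inverse[OF g M Mg] rows_independent_compress[OF e B]
      independent_row_supportD(2)[OF S] range unfolding g_def E_def by simp
  then have "card J = n" using carrier_dims_eq_if_inverse[OF g M _ Mg] by simp
  moreover have "g \<in> GLc n" using g M Mg \<open>card J = n\<close> unfolding GLc_iff by auto
  ultimately show ?thesis using that b J Eg unfolding E_def e_def by auto
qed

subsection \<open>Normal forms for the Borel orbits\<close>

definition embedded_form :: "nat \<Rightarrow> nat \<Rightarrow> nat \<Rightarrow> nat set \<Rightarrow> complex mat \<Rightarrow> complex mat" where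
  "embedded_form m p q J g = (embedding_mat m (p + q) (row_index J) * g) * Ipq p q *
     mat_adjoint (embedding_mat m (p + q) (row_index J) * g)"

lemma embedding_mat_mult_GLc_left_inverse:
  assumes e: "index_embedding m n e" and g: "g \<in> GLc n"
  obtains L where "L \<in> carrier_mat n m" "L * (embedding_mat m n e * g) = 1\<^sub>m n"
proof -
  obtain h where h: "h \<in> carrier_mat n n" "h * g = 1\<^sub>m n" using g unfolding GLc_iff by auto
  have "(h * mat_adjoint (embedding_mat m n e)) * (embedding_mat m n e * g) =
      h * (mat_adjoint (embedding_mat m n e) * embedding_mat m n e) * g"
    using h GLc_carrier[OF g] by (simp add: assoc_mult_mat_dims)
  then have "(h * mat_adjoint (embedding_mat m n e)) * (embedding_mat m n e * g) = 1\<^sub>m n"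
    using h by (simp add: adjoint_embedding_mat_mult_self[OF e])
  moreover have "h * mat_adjoint (embedding_mat m n e) \<in> carrier_mat n m" using h by auto
  ultimately show ?thesis using that by blast
qed

lemma embedded_form_Her:
  assumes J: "J \<subseteq> {1..m}" "card J = p + q" and g: "g \<in> GLc (p + q)"
  shows "embedded_form m p q J g \<in> Her m p q (m - (p + q))"
proof -
  have e: "index_embedding m (p + q) (row_index J)" using index_embedding_row_index[OF J(1)] J(2) by simp
  obtain L where "L \<in> carrier_mat (p + q) m" "L * (embedding_mat m (p + q) (row_index J) * g) = 1\<^sub>m (p + q)"
    by (rule embedding_mat_mult_GLc_left_inverse[OF e g])
  with GLc_carrier[OF g] show ?thesis
    unfolding embedded_form_def by (intro congruence_Ipq_in_Her[where L = L]) auto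
qed

lemma embedded_form_dcoset_rel:
  assumes J: "J \<subseteq> {1..m}" "card J = p + q" and gh: "(g, h) \<in> dcoset_rel p q"
  shows "(embedded_form m p q J g, embedded_form m p q J h) \<in> her_orbit_rel m p q (m - (p + q))"
proof -
  let ?E = "embedding_mat m (p + q) (row_index J)"
  have e: "index_embedding m (p + q) (row_index J)" using index_embedding_row_index[OF J(1)] J(2) by simp
  obtain b u where g: "g \<in> GLc (p + q)" "h \<in> GLc (p + q)" and b: "b \<in> Borel (p + q)" and u: "u \<in> Upq p q"
    and h: "h = b * g * u"
    using gh unfolding dcoset_rel_def by auto
  note carriers = GLc_carrier[OF g(1)] Borel_carrier[OF b] Upq_carrier[OF u]
  define b' where "b' = borel_extension m (p + q) (row_index J) b"
  have b': "b' \<in> Borel m" unfolding b'_def by (rule borel_extension_Borel[OF e b])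
  have "?E * h = (?E * b) * g * u" unfolding h using carriers by (simp add: assoc_mult_mat_dims)
  also have "?E * b = b' * ?E" unfolding b'_def by (rule borel_extension_mult_embedding_mat[OF e carriers(2), symmetric])
  also have "b' * ?E * g * u = b' * ((?E * g) * u)"
    using carriers Borel_carrier[OF b'] by (simp add: assoc_mult_mat_dims)
  finally have Eh: "?E * h = b' * ((?E * g) * u)" .
  then have "embedded_form m p q J h = b' * ((?E * g) * (u * Ipq p q * mat_adjoint u) * mat_adjoint (?E * g)) * mat_adjoint b'"
  proof -
    have Eg: "?E * g \<in> carrier_mat m (p + q)" by (rule mult_carrier_mat[OF embedding_mat_carrier carriers(1)])
    then have "?E * g * u \<in> carrier_mat m (p + q)" by (rule mult_carrier_mat[OF _ carriers(3)])
    then show ?thesis unfolding embedded_form_def Eh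
      by (simp only: congruence_mult[OF Borel_carrier[OF b'] _ Ipq_carrier] congruence_mult[OF Eg carriers(3) Ipq_carrier])
  qed
  also have "u * Ipq p q * mat_adjoint u = Ipq p q" using u unfolding Upq_iff by auto
  finally have "embedded_form m p q J h = b' * embedded_form m p q J g * mat_adjoint b'"
    unfolding embedded_form_def .
  then show ?thesis
    unfolding her_orbit_rel_def using b' embedded_form_Her[OF J] g by blast
qed

lemma embedding_Borel_eq_imp_eq:
  assumes J: "J \<subseteq> {1..m}" "card J = n" and K: "K \<subseteq> {1..m}" "card K = n" and b: "b \<in> Borel m"
    and g: "g \<in> GLc n" and h: "h \<in> GLc n"
    and eq: "embedding_mat m n (row_index K) * h = b * (embedding_mat m n (row_index J) * g)"
  shows "J = K"
proof -

  define e where "e = row_index J"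
  define f where "f = row_index K"
  have e: "index_embedding m n e" and f: "index_embedding m n f"
    using index_embedding_row_index[OF J(1)] index_embedding_row_index[OF K(1)] J(2) K(2)
    unfolding e_def f_def by simp_all
  obtain c where c: "c \<in> Borel m" "c * b = 1\<^sub>m m" by (rule Borel_inverse[OF b])
  obtain g' where g': "g' \<in> carrier_mat n n" "g' * g = 1\<^sub>m n" using g unfolding GLc_iff by auto
  let ?EJ = "embedding_mat m n e" and ?EK = "embedding_mat m n f"
  note carriers = Borel_carrier[OF b] Borel_carrier[OF c(1)] GLc_carrier[OF g] GLc_carrier[OF h]
  have "c * (?EK * h) = (c * b) * (?EJ * g)" unfolding e_def f_def eq using carriers by (simp add: assoc_mult_mat_dims)
  then have EJg: "c * (?EK * h) = ?EJ * g" using c(2) carriers by (simp add: left_mult_one_mat_dims)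
  have EKh: "b * (?EJ * g) = ?EK * h" using eq unfolding e_def f_def ..
  have "g = mat_adjoint ?EJ * (?EJ * g)"
    using carriers by (simp add: assoc_mult_mat_dims[symmetric] adjoint_embedding_mat_mult_self[OF e]
        left_mult_one_mat_dims)
  also have "\<dots> = (mat_adjoint ?EJ * c * ?EK) * h"
    unfolding EJg[symmetric] using carriers by (simp add: assoc_mult_mat_dims)
  also have "h = mat_adjoint ?EK * (?EK * h)"
    using carriers by (simp add: assoc_mult_mat_dims[symmetric] adjoint_embedding_mat_mult_self[OF f]
        left_mult_one_mat_dims)
  also have "\<dots> = (mat_adjoint ?EK * b * ?EJ) * g"
    unfolding EKh[symmetric] using carriers by (simp add: assoc_mult_mat_dims)
  finally have "g = (mat_adjoint ?EJ * c * ?EK) * (mat_adjoint ?EK * b * ?EJ) * g"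
    using carriers by (simp add: assoc_mult_mat_dims)
  note Mg = this[symmetric]
  have gg': "g * g' = 1\<^sub>m n" by (rule mat_mult_left_right_inverse[OF g'(1) carriers(3) g'(2)])
  have "(mat_adjoint ?EJ * c * ?EK) * (mat_adjoint ?EK * b * ?EJ) =
      (mat_adjoint ?EJ * c * ?EK) * (mat_adjoint ?EK * b * ?EJ) * (g * g')"
    unfolding gg' using carriers by (simp add: right_mult_one_mat_dims)
  also have "\<dots> = ((mat_adjoint ?EJ * c * ?EK) * (mat_adjoint ?EK * b * ?EJ) * g) * g'"
    using carriers g'(1) by (simp add: assoc_mult_mat_dims)
  finally have "(mat_adjoint ?EJ * c * ?EK) * (mat_adjoint ?EK * b * ?EJ) = 1\<^sub>m n"
    unfolding Mg gg' .
  then have "e ` {..<n} \<subseteq> f ` {..<n}" by (rule embedding_range_subset_if_Borel_inverse[OF e f b c(1)])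
  then have "Suc ` e ` {..<n} \<subseteq> Suc ` f ` {..<n}" by (rule image_mono)
  then have "J \<subseteq> K"
    using Suc_row_index_image[OF J(1)] Suc_row_index_image[OF K(1)] J(2) K(2) unfolding e_def f_def by simp
  moreover have "finite K" using K(1) finite_subset by blast
  ultimately show ?thesis using J(2) K(2) by (intro card_subset_eq) auto
qed

lemma embedded_form_orbit_imp:
  assumes J: "J \<subseteq> {1..m}" "card J = p + q" and K: "K \<subseteq> {1..m}" "card K = p + q"
    and g: "g \<in> GLc (p + q)" and h: "h \<in> GLc (p + q)"
    and rel: "(embedded_form m p q J g, embedded_form m p q K h) \<in> her_orbit_rel m p q (m - (p + q))"
  shows "J = K" and "(g, h) \<in> dcoset_rel p q"
proof -
  let ?n = "p + q"
  let ?EJ = "embedding_mat m ?n (row_index J)" and ?EK = "embedding_mat m ?n (row_index K)"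
  have e: "index_embedding m ?n (row_index J)" and f: "index_embedding m ?n (row_index K)"
    using index_embedding_row_index[OF J(1)] index_embedding_row_index[OF K(1)] J(2) K(2) by simp_all
  obtain b where b: "b \<in> Borel m" and eq: "embedded_form m p q K h = b * embedded_form m p q J g * mat_adjoint b"
    using rel unfolding her_orbit_rel_def by auto
  obtain c where c: "c \<in> Borel m" "c * b = 1\<^sub>m m" "b * c = 1\<^sub>m m" by (rule Borel_inverse[OF b])
  note carriers = Borel_carrier[OF b] Borel_carrier[OF c(1)] GLc_carrier[OF g] GLc_carrier[OF h]
  have EJg: "?EJ * g \<in> carrier_mat m ?n" and EKh: "?EK * h \<in> carrier_mat m ?n"
    by (rule mult_carrier_mat[OF embedding_mat_carrier], fact)+
  obtain L where L: "L \<in> carrier_mat ?n m" "L * (?EJ * g) = 1\<^sub>m ?n"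
    by (rule embedding_mat_mult_GLc_left_inverse[OF e g])
  obtain L' where L': "L' \<in> carrier_mat ?n m" "L' * (?EK * h) = 1\<^sub>m ?n"
    by (rule embedding_mat_mult_GLc_left_inverse[OF f h])
  let ?A = "b * (?EJ * g)" and ?A' = "?EK * h"
  have A: "?A \<in> carrier_mat m ?n" by (rule mult_carrier_mat[OF carriers(1) EJg])
  have LcA: "(L * c) * ?A = 1\<^sub>m ?n"
  proof -
    have "(L * c) * ?A = L * ((c * b) * (?EJ * g))"
      using L(1) carriers EJg by (simp add: assoc_mult_mat_dims)
    then show ?thesis using c(2) L(2) EJg by (simp add: left_mult_one_mat_dims)
  qed
  have "?A * Ipq p q * mat_adjoint ?A = ?A' * Ipq p q * mat_adjoint ?A'"
    using eq congruence_mult[OF carriers(1) EJg Ipq_carrier] unfolding embedded_form_def by simp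
  \<comment> \<open>Both sides are congruences of \<open>Ipq p q\<close> by left invertible matrices, so they differ by some \<open>u \<in> U(p,q)\<close>.\<close>
  from congruence_left_invertible_factor[OF A mult_carrier_mat[OF L(1) carriers(2)] LcA EKh L' Ipq_carrier
      Ipq_carrier Ipq_mult_Ipq this]
  have A': "?A' = ?A * (L * c * ?A')" and u: "Ipq p q = (L * c * ?A') * Ipq p q * mat_adjoint (L * c * ?A')" .
  define u where "u = L * c * ?A'"
  have "u \<in> carrier_mat ?n ?n" unfolding u_def by (rule mult_carrier_mat[OF mult_carrier_mat[OF L(1) carriers(2)] EKh])
  then have u: "u \<in> Upq p q" using u unfolding Upq_iff u_def by simp
  have EKh_eq: "?EK * h = b * (?EJ * (g * u))"
    using A' carriers Upq_carrier[OF u] unfolding u_def[symmetric] by (simp add: assoc_mult_mat_dims)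
  have gu: "g * u \<in> GLc ?n" using GLc_mult[OF g] Upq_subset_GLc u by blast
  show JK: "J = K" by (rule embedding_Borel_eq_imp_eq[OF J K b gu h EKh_eq])
  have "h = mat_adjoint ?EK * (?EK * h)"
    using carriers by (simp add: assoc_mult_mat_dims[symmetric] adjoint_embedding_mat_mult_self[OF f]
        left_mult_one_mat_dims)
  also have "\<dots> = (mat_adjoint ?EJ * b * ?EJ) * g * u"
    unfolding EKh_eq JK using carriers Upq_carrier[OF u] by (simp add: assoc_mult_mat_dims)
  finally have "h = (mat_adjoint ?EJ * b * ?EJ) * g * u" .
  then show "(g, h) \<in> dcoset_rel p q"
    unfolding dcoset_rel_def using g h u compress_Borel[OF e b] by blast
qed

lemma her_orbit_meets_embedded_form:
  assumes z: "z \<in> Her m p q (m - (p + q))"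
  obtains J g where "J \<subseteq> {1..m}" "card J = p + q" "g \<in> GLc (p + q)"
    "(z, embedded_form m p q J g) \<in> her_orbit_rel m p q (m - (p + q))"
proof -
  have zc: "z \<in> carrier_mat m m" and herm: "mat_adjoint z = z" and pq: "num_pos_eig z = p" "num_neg_eig z = q"
    using z unfolding Her_def by auto
  obtain A L where A: "A \<in> carrier_mat m (p + q)" and L: "L \<in> carrier_mat (p + q) m"
    and LA: "L * A = 1\<^sub>m (p + q)" and zA: "z = A * Ipq p q * mat_adjoint A"
    by (rule hermitian_signature_factorization[OF zc herm, unfolded pq])
  obtain b J g where b: "b \<in> Borel m" and J: "J \<subseteq> {1..m}" "card J = p + q" and g: "g \<in> GLc (p + q)"
    and bA: "b * A = embedding_mat m (p + q) (row_index J) * g"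
    by (rule borel_embedding_factorization[OF A L LA])
  have "embedded_form m p q J g = b * z * mat_adjoint b"
    unfolding embedded_form_def bA[symmetric] zA by (rule congruence_mult[OF Borel_carrier[OF b] A Ipq_carrier])
  then have "(z, embedded_form m p q J g) \<in> her_orbit_rel m p q (m - (p + q))"
    unfolding her_orbit_rel_def using z b embedded_form_Her[OF J g] by auto
  then show ?thesis using that J g by blast
qed

theorem lemma8p16:
  fixes m p q r :: nat
  assumes "p + q \<le> m" and "r = m - (p + q)"
  shows "\<exists>f. bij_betw f (Her m p q r // her_orbit_rel m p q r)
           (SIGMA J : {J. J \<subseteq> {1..m} \<and> card J = p + q}. GLc (p + q) // dcoset_rel p q)"
  unfolding assms(2)
proof (rule ex_bij_betw_quotient_Sigma[OF equiv_her_orbit_rel equiv_dcoset_rel])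
  fix J g assume "J \<in> {J. J \<subseteq> {1..m} \<and> card J = p + q}" "g \<in> GLc (p + q)"
  then show "embedded_form m p q J g \<in> Her m p q (m - (p + q))" by (intro embedded_form_Her) auto
next
  fix J g h assume "J \<in> {J. J \<subseteq> {1..m} \<and> card J = p + q}" "(g, h) \<in> dcoset_rel p q"
  then show "(embedded_form m p q J g, embedded_form m p q J h) \<in> her_orbit_rel m p q (m - (p + q))"
    by (intro embedded_form_dcoset_rel) auto
next
  fix J K g h
  assume "J \<in> {J. J \<subseteq> {1..m} \<and> card J = p + q}" "K \<in> {J. J \<subseteq> {1..m} \<and> card J = p + q}"
    "g \<in> GLc (p + q)" "h \<in> GLc (p + q)"
    "(embedded_form m p q J g, embedded_form m p q K h) \<in> her_orbit_rel m p q (m - (p + q))"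
  then show "J = K \<and> (g, h) \<in> dcoset_rel p q" using embedded_form_orbit_imp[of J m p q K g h] by simp
next
  fix z assume "z \<in> Her m p q (m - (p + q))"
  then show "\<exists>J\<in>{J. J \<subseteq> {1..m} \<and> card J = p + q}. \<exists>g\<in>GLc (p + q).
      (z, embedded_form m p q J g) \<in> her_orbit_rel m p q (m - (p + q))"
    by (rule her_orbit_meets_embedded_form) blast
qed

end
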